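(* Let $\lambda=(\lambda_1,\dots,\lambda_p)$ and $\mu=(\mu_1,\dots,\mu_q)$ be compositions of $n$ and let $\mathbf{k}=(k_1,\dots,k_p)$, $\mathbf{k}'=(k'_1,\dots,k'_q)$ be tuples of integers. Then, as representations of $T\rtimes S_n$, $$M(\lambda,\mathbf{k})\otimes M(\mu,\mathbf{k}')\cong\bigoplus_{B\in T(\lambda,\mu)}M(B,\mathbf{k}+\mathbf{k}'),$$ where $T(\lambda,\mu)$ is the set of $p\times q$ matrices $B=(b_{ij})$ of nonnegative integers whose $i$th row sums to $\lambda_i$ and $j$th column sums to $\mu_j$, and $M(B,\mathbf{k}+\mathbf{k}')$ is the weighted permutation module whose composition consists of the nonzero entries $b_{ij}$ of $B$, with the entry $b_{ij}$ assigned the weight $k_i+k'_j$.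
   Context: Let $T\subset GL_n(\mathbb{C})$ be the diagonal torus, $S_n$ the permutation matrices, and $T\rtimes S_n\cong\mathbb{C}^\times\wr S_n$ the monomial matrices; representations are complex algebraic. For a partition $\lambda$ of $r$ and integer $k$, $S^{\lambda,k}$ is the representation of $\mathbb{C}^\times\wr S_r$ on the Specht module $S^\lambda$ with each copy of $\mathbb{C}^\times$ acting by $z\mapsto z^k$. For a composition $\nu=(\nu_1,\dots,\nu_\ell)$ of $n$ (positive parts) and integers $\mathbf{w}=(w_1,\dots,w_\ell)$, the weighted permutation module is $$M(\nu,\mathbf{w}):=\mathrm{Ind}_{(\mathbb{C}^\times\wr S_{\nu_1})\times\dots\times(\mathbb{C}^\times\wr S_{\nu_\ell})}^{\mathbb{C}^\times\wr S_n}\left(S^{(\nu_1),w_1}\otimes\dots\otimes S^{(\nu_\ell),w_\ell}\right),$$ with block-diagonal product subgroup; its isomorphism class is unchanged by simultaneously permuting the parts and the weights. *)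

theory Defs
  imports Complex_Main "HOL-Combinatorics.Permutations"
begin

text \<open>Elements of the monomial group T \<rtimes> S_n = C^* wr S_n, as pairs (t, sigma):
  the monomial matrix diag(t) * P_sigma, where P_sigma e_j = e_(sigma j).\<close>

type_synonym wgrp = "(nat \<Rightarrow> complex) \<times> (nat \<Rightarrow> nat)"

definition wreath :: "nat \<Rightarrow> wgrp set" where
  "wreath n = {(t, \<sigma>). (\<forall>i<n. t i \<noteq> 0) \<and> (\<forall>i\<ge>n. t i = 1) \<and> \<sigma> permutes {..<n}}"

definition wmult :: "wgrp \<Rightarrow> wgrp \<Rightarrow> wgrp" where
  "wmult g h = (case g of (t, \<sigma>) \<Rightarrow> case h of (s, \<tau>) \<Rightarrow>
      ((\<lambda>i. t i * s (inv \<sigma> i)), \<sigma> \<circ> \<tau>))"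

definition block :: "nat list \<Rightarrow> nat \<Rightarrow> nat set" where
  "block \<nu> i = {sum_list (take i \<nu>) ..< sum_list (take (Suc i) \<nu>)}"

definition is_composition :: "nat list \<Rightarrow> nat \<Rightarrow> bool" where
  "is_composition \<nu> n \<longleftrightarrow> (\<forall>x\<in>set \<nu>. 0 < x) \<and> sum_list \<nu> = n"

definition young_sub :: "nat list \<Rightarrow> wgrp set" where
  "young_sub \<nu> = {(t, \<sigma>) \<in> wreath (sum_list \<nu>).
      \<forall>i<length \<nu>. \<sigma> ` block \<nu> i = block \<nu> i}"

text \<open>The one-dimensional representation S^{(nu_1),w_1} x ... x S^{(nu_l),w_l}:
  the Specht module of a one-row partition is trivial, and each copy of C^* in the
  i-th factor acts by z \<mapsto> z^(w_i).\<close>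

definition wchar :: "nat list \<Rightarrow> int list \<Rightarrow> wgrp \<Rightarrow> complex" where
  "wchar \<nu> w g = (\<Prod>i<length \<nu>. \<Prod>j\<in>block \<nu> i. (fst g j) powi (w ! i))"

text \<open>Induced representation Ind_H^G chi, realised as the space of functions
  phi : G \<rightarrow> C with phi(h g) = chi(h) phi(g) for h in H, with G acting by right
  translation.  (Functions are extended by 0 outside G.)\<close>

definition ind_space :: "nat \<Rightarrow> nat list \<Rightarrow> int list \<Rightarrow> (wgrp \<Rightarrow> complex) set" where
  "ind_space n \<nu> w = {\<phi>. (\<forall>g. g \<notin> wreath n \<longrightarrow> \<phi> g = 0) \<and>
      (\<forall>h\<in>young_sub \<nu>. \<forall>g\<in>wreath n. \<phi> (wmult h g) = wchar \<nu> w h * \<phi> g)}"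

definition ind_act :: "nat \<Rightarrow> wgrp \<Rightarrow> (wgrp \<Rightarrow> complex) \<Rightarrow> (wgrp \<Rightarrow> complex)" where
  "ind_act n g \<phi> = (\<lambda>x. if x \<in> wreath n then \<phi> (wmult x g) else 0)"

definition Mperm :: "nat list \<Rightarrow> int list \<Rightarrow> (wgrp \<Rightarrow> complex) set" where
  "Mperm \<nu> w = ind_space (sum_list \<nu>) \<nu> w"

definition tensor_space :: "('a \<Rightarrow> complex) set \<Rightarrow> ('b \<Rightarrow> complex) set \<Rightarrow> ('a \<times> 'b \<Rightarrow> complex) set" where
  "tensor_space V W = {\<Phi>. \<exists>(m::nat) (c::nat \<Rightarrow> complex) \<phi> \<psi>. (\<forall>i<m. \<phi> i \<in> V \<and> \<psi> i \<in> W) \<and>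
      \<Phi> = (\<lambda>(x, y). \<Sum>i<m. c i * \<phi> i x * \<psi> i y)}"

definition tensor_act :: "nat \<Rightarrow> wgrp \<Rightarrow> (wgrp \<times> wgrp \<Rightarrow> complex) \<Rightarrow> (wgrp \<times> wgrp \<Rightarrow> complex)" where
  "tensor_act n g \<Phi> = (\<lambda>(x, y). if x \<in> wreath n \<and> y \<in> wreath n
       then \<Phi> (wmult x g, wmult y g) else 0)"

definition Tmat :: "nat list \<Rightarrow> nat list \<Rightarrow> (nat \<Rightarrow> nat \<Rightarrow> nat) set" where
  "Tmat la mu = {B. (\<forall>i j. (length la \<le> i \<or> length mu \<le> j) \<longrightarrow> B i j = 0) \<and>
      (\<forall>i<length la. (\<Sum>j<length mu. B i j) = la ! i) \<and>
      (\<forall>j<length mu. (\<Sum>i<length la. B i j) = mu ! j)}"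

definition mat_comp :: "nat \<Rightarrow> nat \<Rightarrow> (nat \<Rightarrow> nat \<Rightarrow> nat) \<Rightarrow> nat list" where
  "mat_comp p q B = [B i j. i \<leftarrow> [0..<p], j \<leftarrow> [0..<q], B i j \<noteq> 0]"

definition mat_wts :: "nat \<Rightarrow> nat \<Rightarrow> (nat \<Rightarrow> nat \<Rightarrow> nat) \<Rightarrow> int list \<Rightarrow> int list \<Rightarrow> int list" where
  "mat_wts p q B k k' = [k ! i + k' ! j. i \<leftarrow> [0..<p], j \<leftarrow> [0..<q], B i j \<noteq> 0]"

definition dsum_space :: "nat list \<Rightarrow> nat list \<Rightarrow> int list \<Rightarrow> int list
      \<Rightarrow> ((nat \<Rightarrow> nat \<Rightarrow> nat) \<times> wgrp \<Rightarrow> complex) set" where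
  "dsum_space la mu k k' = {\<Phi>. (\<forall>B x. B \<notin> Tmat la mu \<longrightarrow> \<Phi> (B, x) = 0) \<and>
      (\<forall>B\<in>Tmat la mu. (\<lambda>x. \<Phi> (B, x)) \<in>
          Mperm (mat_comp (length la) (length mu) B) (mat_wts (length la) (length mu) B k k'))}"

definition dsum_act :: "nat \<Rightarrow> wgrp \<Rightarrow> ((nat \<Rightarrow> nat \<Rightarrow> nat) \<times> wgrp \<Rightarrow> complex)
      \<Rightarrow> ((nat \<Rightarrow> nat \<Rightarrow> nat) \<times> wgrp \<Rightarrow> complex)" where
  "dsum_act n g \<Phi> = (\<lambda>(B, x). ind_act n g (\<lambda>y. \<Phi> (B, y)) x)"

definition rep_iso :: "nat \<Rightarrow> ('a \<Rightarrow> complex) set \<Rightarrow> (wgrp \<Rightarrow> ('a \<Rightarrow> complex) \<Rightarrow> ('a \<Rightarrow> complex))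
     \<Rightarrow> ('b \<Rightarrow> complex) set \<Rightarrow> (wgrp \<Rightarrow> ('b \<Rightarrow> complex) \<Rightarrow> ('b \<Rightarrow> complex)) \<Rightarrow> bool" where
  "rep_iso n V \<rho> W \<rho>' \<longleftrightarrow> (\<exists>f. bij_betw f V W \<and>
      (\<forall>u\<in>V. \<forall>v\<in>V. \<forall>a b. f (\<lambda>x. a * u x + b * v x) = (\<lambda>y. a * f u y + b * f v y)) \<and>
      (\<forall>g\<in>wreath n. \<forall>v\<in>V. f (\<rho> g v) = \<rho>' g (f v)))"

end

theory Submission
  imports Defs
begin

text \<open>Both sides are spaces of functions on the monomial group \<open>G = T \<rtimes> S_n\<close>, and the statement is an
  instance of Mackey's formula. A tensor is a function on \<open>G \<times> G\<close> that transforms under the torus by the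
  two characters and is invariant under \<open>S_la \<times> S_mu\<close> acting on the permutation parts; so it is
  determined by its values on pairs \<open>(\<sigma>, \<sigma>')\<close> of permutations, and modulo the diagonal action of \<open>S_n\<close>
  these pairs are indexed by the double cosets \<open>S_mu \<sigma>' \<sigma>\<^sup>-\<^sup>1 S_la\<close>. The double cosets are classified
  by the matrices \<open>B\<close> in \<open>T(la, mu)\<close>, the entry \<open>(a, b)\<close> counting the points of block \<open>a\<close> of \<open>la\<close> that
  are sent into block \<open>b\<close> of \<open>mu\<close>. Restricting a tensor to the pairs \<open>(x, \<pi>\<^sub>B x)\<close>, for a representative
  \<open>\<pi>\<^sub>B\<close> of each double coset, gives the isomorphism: the stabiliser \<open>S_la \<inter> \<pi>\<^sub>B\<^sup>-\<^sup>1 S_mu \<pi>\<^sub>B\<close> is the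
  Young subgroup of the composition of nonzero entries of \<open>B\<close>, and the torus acts on the restriction
  by the product of the two characters, i.e. with weight \<open>k ! a + k' ! b\<close> on the block of entry \<open>(a, b)\<close>.\<close>

definition block_index :: "nat list \<Rightarrow> nat \<Rightarrow> nat" where
  "block_index \<nu> x = card {r. r < length \<nu> \<and> sum_list (take (Suc r) \<nu>) \<le> x}"

lemma sum_list_take_Suc:
  "r < length \<nu> \<Longrightarrow> sum_list (take (Suc r) \<nu>) = sum_list (take r \<nu>) + \<nu> ! r"
  by (simp add: take_Suc_conv_app_nth)

lemma sum_list_take_mono: "r \<le> r' \<Longrightarrow> sum_list (take r \<nu>) \<le> sum_list (take r' (\<nu> :: nat list))"
proof (induction r' rule: dec_induct)
  case (step m)
  then show ?case
    by (cases "m < length \<nu>") (auto simp: sum_list_take_Suc)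
qed simp

lemma downward_closed_eq_lessThan:
  assumes "finite S" and "\<And>x y. x \<in> S \<Longrightarrow> y \<le> x \<Longrightarrow> y \<in> S"
  shows "S = {..<card S}"
proof -
  have "S \<subseteq> {..<card S}"
  proof
    fix x assume "x \<in> S"
    then have "{..x} \<subseteq> S" using assms(2) by auto
    then have "card {..x} \<le> card S" using assms(1) by (rule card_mono[rotated])
    then show "x \<in> {..<card S}" by simp
  qed
  then show ?thesis using assms(1) by (intro card_subset_eq) auto
qed

lemma blocks_below_eq_lessThan:
  "{r. r < length \<nu> \<and> sum_list (take (Suc r) \<nu>) \<le> x} = {..<block_index \<nu> x}"
  unfolding block_index_def
  by (rule downward_closed_eq_lessThan) (auto intro: order.trans[OF sum_list_take_mono])

lemma block_index_mono: "x \<le> y \<Longrightarrow> block_index \<nu> x \<le> block_index \<nu> y"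
  unfolding block_index_def by (rule card_mono) auto

lemma block_index_less:
  assumes "is_composition \<nu> n" and "x < n"
  shows "block_index \<nu> x < length \<nu>"
proof -
  have "block_index \<nu> x \<le> length \<nu>"
    unfolding block_index_def by (rule order.trans[OF card_mono[of "{..<length \<nu>}"]]) auto
  moreover have "block_index \<nu> x \<noteq> length \<nu>"
  proof
    assume full: "block_index \<nu> x = length \<nu>"
    have "\<nu> \<noteq> []" using assms by (auto simp: is_composition_def)
    with full have "length \<nu> - 1 \<in> {..<block_index \<nu> x}" by simp
    then have "sum_list (take (Suc (length \<nu> - 1)) \<nu>) \<le> x"
      using blocks_below_eq_lessThan[of \<nu> x] by blast
    then have "n \<le> x" using \<open>\<nu> \<noteq> []\<close> assms(1) by (simp add: is_composition_def)
    then show False using assms(2) by simp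
  qed
  ultimately show ?thesis by simp
qed

lemma block_eq_block_index_fiber:
  assumes comp: "is_composition \<nu> n" and i: "i < length \<nu>"
  shows "block \<nu> i = {x. x < n \<and> block_index \<nu> x = i}"
proof (intro set_eqI iffI)
  fix x assume "x \<in> block \<nu> i"
  then have x: "sum_list (take i \<nu>) \<le> x" "x < sum_list (take (Suc i) \<nu>)"
    by (auto simp: block_def)
  have "sum_list (take (Suc i) \<nu>) \<le> n"
    using sum_list_take_mono[of "Suc i" "length \<nu>" \<nu>] i comp by (simp add: is_composition_def)
  moreover have "{..<block_index \<nu> x} = {..<i}"
    unfolding blocks_below_eq_lessThan[symmetric]
  proof (intro set_eqI iffI)
    fix r assume r: "r \<in> {r. r < length \<nu> \<and> sum_list (take (Suc r) \<nu>) \<le> x}"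
    have "\<not> i \<le> r"
      using r x sum_list_take_mono[of "Suc i" "Suc r" \<nu>] by auto
    then show "r \<in> {..<i}" by simp
  next
    fix r assume "r \<in> {..<i}"
    then show "r \<in> {r. r < length \<nu> \<and> sum_list (take (Suc r) \<nu>) \<le> x}"
      using i x(1) sum_list_take_mono[of "Suc r" i \<nu>] by auto
  qed
  ultimately show "x \<in> {x. x < n \<and> block_index \<nu> x = i}" using x by auto
next
  fix x assume "x \<in> {x. x < n \<and> block_index \<nu> x = i}"
  then have below: "{r. r < length \<nu> \<and> sum_list (take (Suc r) \<nu>) \<le> x} = {..<i}"
    using blocks_below_eq_lessThan by auto
  then have "\<not> sum_list (take (Suc i) \<nu>) \<le> x" using i by blast
  moreover have "sum_list (take i \<nu>) \<le> x"
    using below i by (cases i) auto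
  ultimately show "x \<in> block \<nu> i" by (auto simp: block_def)
qed

lemma card_block_index_fiber:
  assumes "is_composition \<nu> n"
  shows "card {x. x < n \<and> block_index \<nu> x = i} = (if i < length \<nu> then \<nu> ! i else 0)"
proof (cases "i < length \<nu>")
  case True
  then have "card (block \<nu> i) = \<nu> ! i" by (simp add: block_def sum_list_take_Suc)
  then show ?thesis using block_eq_block_index_fiber[OF assms True] True by simp
next
  case False
  then have "{x. x < n \<and> block_index \<nu> x = i} = {}" using block_index_less[OF assms] by force
  then show ?thesis using False by simp
qed

lemma mono_eq_if_card_fibers_eq:
  fixes f g :: "nat \<Rightarrow> nat"
  assumes mono_f: "\<And>i j. i \<le> j \<Longrightarrow> j < n \<Longrightarrow> f i \<le> f j"
    and mono_g: "\<And>i j. i \<le> j \<Longrightarrow> j < n \<Longrightarrow> g i \<le> g j"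
    and fibers: "\<And>a. card {i. i < n \<and> f i = a} = card {i. i < n \<and> g i = a}"
    and "i < n"
  shows "f i = g i"
proof -
  have card_le: "card {i. i < n \<and> h i \<le> a} = (\<Sum>a'\<le>a. card {i. i < n \<and> h i = a'})"
    for h :: "nat \<Rightarrow> nat" and a
  proof -
    have "{i. i < n \<and> h i \<le> a} = (\<Union>a'\<le>a. {i. i < n \<and> h i = a'})" by auto
    then show ?thesis by (simp only:) (rule card_UN_disjoint, auto)
  qed
  have "f i \<le> a \<longleftrightarrow> g i \<le> a" for a
  proof -
    \<comment> \<open>for monotone labellings the sublevel sets are initial segments, fixed by their sizes\<close>
    have "{i. i < n \<and> f i \<le> a} = {..<card {i. i < n \<and> f i \<le> a}}"
      by (rule downward_closed_eq_lessThan) (auto intro: order.trans[OF mono_f])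
    moreover have "{i. i < n \<and> g i \<le> a} = {..<card {i. i < n \<and> g i \<le> a}}"
      by (rule downward_closed_eq_lessThan) (auto intro: order.trans[OF mono_g])
    moreover have "card {i. i < n \<and> f i \<le> a} = card {i. i < n \<and> g i \<le> a}"
      by (simp add: card_le fibers)
    ultimately have "{i. i < n \<and> f i \<le> a} = {i. i < n \<and> g i \<le> a}" by simp
    then show ?thesis using \<open>i < n\<close> by blast
  qed
  from this[of "f i"] this[of "g i"] show ?thesis by simp
qed

lemma card_eq_sum_card_fibers:
  assumes "finite S" and "finite T" and "f ` S \<subseteq> T"
  shows "card S = (\<Sum>y\<in>T. card {x \<in> S. f x = y})"
  using sum.group[OF assms, of "\<lambda>_. 1 :: nat"] by simp

lemma permutation_matching_labels:
  fixes l1 l2 :: "nat \<Rightarrow> 'a"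
  assumes "\<And>v. card {i. i < n \<and> l1 i = v} = card {i. i < n \<and> l2 i = v}"
  obtains \<alpha> where "\<alpha> permutes {..<n}" and "\<And>i. i < n \<Longrightarrow> l2 (\<alpha> i) = l1 i"
proof -
  have "count (mset (map l [0..<n])) v = card {i. i < n \<and> l i = v}" for l :: "nat \<Rightarrow> 'a" and v
    unfolding count_mset count_list_eq_length_filter length_filter_conv_card
    by (intro arg_cong[where f = card]) auto
  then have "mset (map l1 [0..<n]) = mset (map l2 [0..<n])"
    using assms by (intro multiset_eqI) simp
  then obtain p where p: "p permutes {..<length (map l2 [0..<n])}"
      "permute_list p (map l2 [0..<n]) = map l1 [0..<n]"
    by (rule mset_eq_permutation)
  then have "p permutes {..<n}" by simp
  moreover have "l2 (p i) = l1 i" if "i < n" for i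
    using arg_cong[OF p(2), of "\<lambda>xs. xs ! i"] permutes_in_image[OF \<open>p permutes {..<n}\<close>, of i] that
    by (simp add: permute_list_def)
  ultimately show ?thesis using that by blast
qed

definition young_perm :: "nat list \<Rightarrow> (nat \<Rightarrow> nat) \<Rightarrow> bool" where
  "young_perm \<nu> \<pi> \<longleftrightarrow> (\<forall>x. block_index \<nu> (\<pi> x) = block_index \<nu> x)"

definition torus_char :: "nat list \<Rightarrow> int list \<Rightarrow> (nat \<Rightarrow> complex) \<Rightarrow> complex" where
  "torus_char \<nu> w t = (\<Prod>j<sum_list \<nu>. t j powi (w ! block_index \<nu> j))"

lemma young_perm_id: "young_perm \<nu> id"
  by (simp add: young_perm_def)

lemma young_perm_comp: "young_perm \<nu> \<kappa> \<Longrightarrow> young_perm \<nu> \<sigma> \<Longrightarrow> young_perm \<nu> (\<kappa> \<circ> \<sigma>)"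
  by (simp add: young_perm_def)

lemma young_perm_inv: "bij \<kappa> \<Longrightarrow> young_perm \<nu> \<kappa> \<Longrightarrow> young_perm \<nu> (inv \<kappa>)"
  unfolding young_perm_def by (metis bij_inv_eq_iff)

lemma wchar_eq_torus_char:
  assumes "is_composition \<nu> n"
  shows "wchar \<nu> w g = torus_char \<nu> w (fst g)"
proof -
  have sum_eq: "sum_list \<nu> = n" using assms by (simp add: is_composition_def)
  have "wchar \<nu> w g = (\<Prod>i<length \<nu>. \<Prod>j\<in>{x \<in> {..<n}. block_index \<nu> x = i}.
      fst g j powi (w ! block_index \<nu> j))"
    unfolding wchar_def by (intro prod.cong refl) (auto simp: block_eq_block_index_fiber[OF assms])
  also have "\<dots> = torus_char \<nu> w (fst g)"
    unfolding torus_char_def sum_eq by (rule prod.group) (auto simp: block_index_less[OF assms])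
  finally show ?thesis .
qed

lemma young_sub_iff:
  assumes comp: "is_composition \<nu> n"
  shows "(t, \<sigma>) \<in> young_sub \<nu> \<longleftrightarrow> (t, \<sigma>) \<in> wreath n \<and> young_perm \<nu> \<sigma>"
proof (cases "\<sigma> permutes {..<n}")
  case perm: True
  have "(\<forall>i<length \<nu>. \<sigma> ` block \<nu> i = block \<nu> i) \<longleftrightarrow> young_perm \<nu> \<sigma>"
  proof
    assume blocks: "\<forall>i<length \<nu>. \<sigma> ` block \<nu> i = block \<nu> i"
    show "young_perm \<nu> \<sigma>" unfolding young_perm_def
    proof
      fix x show "block_index \<nu> (\<sigma> x) = block_index \<nu> x"
      proof (cases "x < n")
        case True
        then have i: "block_index \<nu> x < length \<nu>" and "x \<in> block \<nu> (block_index \<nu> x)"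
          using block_index_less[OF comp] block_eq_block_index_fiber[OF comp] by auto
        then have "\<sigma> x \<in> block \<nu> (block_index \<nu> x)" using blocks by blast
        then show ?thesis using block_eq_block_index_fiber[OF comp i] by simp
      qed (simp add: permutes_not_in[OF perm])
    qed
  next
    assume "young_perm \<nu> \<sigma>"
    then have "\<sigma> ` block \<nu> i \<subseteq> block \<nu> i" if "i < length \<nu>" for i
      using that permutes_in_image[OF perm]
      by (auto simp: block_eq_block_index_fiber[OF comp] young_perm_def)
    moreover have "inj_on \<sigma> (block \<nu> i)" for i
      using permutes_inj[OF perm] by (rule inj_on_subset) simp
    ultimately show "\<forall>i<length \<nu>. \<sigma> ` block \<nu> i = block \<nu> i"
      by (simp add: endo_inj_surj block_def)
  qed
  then show ?thesis using comp by (simp add: young_sub_def is_composition_def)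
qed (use comp in \<open>simp add: young_sub_def wreath_def is_composition_def\<close>)

lemma torus_char_one [simp]: "torus_char \<nu> w (\<lambda>_. 1) = 1"
  by (simp add: torus_char_def)

lemma torus_char_mult: "torus_char \<nu> w (\<lambda>i. t i * s i) = torus_char \<nu> w t * torus_char \<nu> w s"
  by (simp add: torus_char_def power_int_mult_distrib prod.distrib)

lemma torus_char_permute:
  assumes "is_composition \<nu> n" and "\<kappa> permutes {..<n}" and "young_perm \<nu> \<kappa>"
  shows "torus_char \<nu> w (\<lambda>i. t (inv \<kappa> i)) = torus_char \<nu> w t"
proof -
  have n: "sum_list \<nu> = n" using assms(1) by (simp add: is_composition_def)
  have "torus_char \<nu> w (\<lambda>i. t (inv \<kappa> i))
      = (\<Prod>j<n. t (inv \<kappa> (\<kappa> j)) powi (w ! block_index \<nu> (\<kappa> j)))"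
    unfolding torus_char_def n by (rule prod.reindex_bij_betw[OF permutes_imp_bij[OF assms(2)], symmetric])
  also have "\<dots> = torus_char \<nu> w t"
    using assms by (simp add: torus_char_def n permutes_inverses(2) young_perm_def)
  finally show ?thesis .
qed

abbreviation perm_mat :: "(nat \<Rightarrow> nat) \<Rightarrow> wgrp" where
  "perm_mat \<sigma> \<equiv> (\<lambda>_. 1, \<sigma>)"

lemma wmult_Pair [simp]: "wmult (t, \<sigma>) (s, \<tau>) = (\<lambda>i. t i * s (inv \<sigma> i), \<sigma> \<circ> \<tau>)"
  by (simp add: wmult_def)

lemma Pair_in_wreath_iff:
  "(t, \<sigma>) \<in> wreath n \<longleftrightarrow> (\<forall>i<n. t i \<noteq> 0) \<and> (\<forall>i\<ge>n. t i = 1) \<and> \<sigma> permutes {..<n}"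
  by (simp add: wreath_def)

lemma permutes_less_iff: "\<gamma> permutes {..<n} \<Longrightarrow> \<gamma> i < n \<longleftrightarrow> i < n"
  using permutes_in_image[of \<gamma> "{..<n}" i] by simp

lemma perm_mat_in_wreath: "\<sigma> permutes {..<n} \<Longrightarrow> perm_mat \<sigma> \<in> wreath n"
  by (simp add: wreath_def)

lemma wmult_in_wreath:
  assumes "x \<in> wreath n" and "g \<in> wreath n"
  shows "wmult x g \<in> wreath n"
proof -
  obtain t \<sigma> s \<tau> where x: "x = (t, \<sigma>)" and g: "g = (s, \<tau>)" by fastforce
  have perm: "\<sigma> permutes {..<n}" "\<tau> permutes {..<n}" using assms x g by (auto simp: wreath_def)
  have "inv \<sigma> i < n \<longleftrightarrow> i < n" for i
    using permutes_in_image[OF permutes_inv[OF perm(1)], of i]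
      permutes_not_in[OF permutes_inv[OF perm(1)], of i] by (cases "i < n") auto
  moreover have "inv \<sigma> i = i" if "\<not> i < n" for i
    using permutes_not_in[OF permutes_inv[OF perm(1)], of i] that by simp
  ultimately show ?thesis using assms perm unfolding x g
    by (auto simp: Pair_in_wreath_iff intro: permutes_compose)
qed

lemma wmult_assoc:
  assumes "bij \<sigma>" and "bij \<tau>"
  shows "wmult (wmult (t, \<sigma>) (s, \<tau>)) (r, \<rho>) = wmult (t, \<sigma>) (wmult (s, \<tau>) (r, \<rho>))"
  using assms by (simp add: o_inv_distrib mult.assoc comp_assoc)

lemma ind_space_vanishes: "\<phi> \<in> ind_space n \<nu> w \<Longrightarrow> x \<notin> wreath n \<Longrightarrow> \<phi> x = 0"
  unfolding ind_space_def by blast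

lemma ind_space_torus_char:
  assumes "\<phi> \<in> ind_space n \<nu> w" and "is_composition \<nu> n" and "(t, \<sigma>) \<in> wreath n"
  shows "\<phi> (t, \<sigma>) = torus_char \<nu> w t * \<phi> (perm_mat \<sigma>)"
proof -
  have "(t, id) \<in> young_sub \<nu>" and "perm_mat \<sigma> \<in> wreath n"
    using assms(2,3) by (simp_all add: young_sub_iff young_perm_id wreath_def)
  then have "\<phi> (wmult (t, id) (perm_mat \<sigma>)) = wchar \<nu> w (t, id) * \<phi> (perm_mat \<sigma>)"
    using assms(1) unfolding ind_space_def by blast
  then show ?thesis by (simp add: wchar_eq_torus_char[OF assms(2)])
qed

lemma ind_space_young_invariant:
  assumes "\<phi> \<in> ind_space n \<nu> w" and "is_composition \<nu> n"
    and "\<kappa> permutes {..<n}" and "young_perm \<nu> \<kappa>" and "\<sigma> permutes {..<n}"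
  shows "\<phi> (perm_mat (\<kappa> \<circ> \<sigma>)) = \<phi> (perm_mat \<sigma>)"
proof -
  have "perm_mat \<kappa> \<in> young_sub \<nu>" and "perm_mat \<sigma> \<in> wreath n"
    using assms(2-5) by (simp_all add: young_sub_iff perm_mat_in_wreath)
  then have "\<phi> (wmult (perm_mat \<kappa>) (perm_mat \<sigma>)) = wchar \<nu> w (perm_mat \<kappa>) * \<phi> (perm_mat \<sigma>)"
    using assms(1) unfolding ind_space_def by blast
  then show ?thesis by (simp add: wchar_eq_torus_char[OF assms(2)])
qed

lemma ind_spaceI:
  assumes comp: "is_composition \<nu> n"
    and F: "\<And>\<kappa> \<sigma>. \<kappa> permutes {..<n} \<Longrightarrow> young_perm \<nu> \<kappa> \<Longrightarrow> \<sigma> permutes {..<n} \<Longrightarrow> F (\<kappa> \<circ> \<sigma>) = F \<sigma>"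
  shows "(\<lambda>x. if x \<in> wreath n then torus_char \<nu> w (fst x) * F (snd x) else 0) \<in> ind_space n \<nu> w"
  unfolding ind_space_def mem_Collect_eq
proof (intro conjI allI impI ballI)
  fix h g assume h: "h \<in> young_sub \<nu>" and g: "g \<in> wreath n"
  obtain s \<kappa> t \<sigma> where hg: "h = (s, \<kappa>)" "g = (t, \<sigma>)" by fastforce
  have "h \<in> wreath n" and young: "young_perm \<nu> \<kappa>" using h comp unfolding hg by (auto simp: young_sub_iff)
  then have perm: "\<kappa> permutes {..<n}" "\<sigma> permutes {..<n}" using g unfolding hg by (auto simp: wreath_def)
  have "wmult h g \<in> wreath n" using \<open>h \<in> wreath n\<close> g by (rule wmult_in_wreath)
  moreover have "torus_char \<nu> w (\<lambda>i. s i * t (inv \<kappa> i)) = torus_char \<nu> w s * torus_char \<nu> w t"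
    using torus_char_permute[OF comp perm(1) young] by (simp add: torus_char_mult)
  ultimately show "(if wmult h g \<in> wreath n then torus_char \<nu> w (fst (wmult h g)) * F (snd (wmult h g)) else 0)
      = wchar \<nu> w h * (if g \<in> wreath n then torus_char \<nu> w (fst g) * F (snd g) else 0)"
    using g F[OF perm(1) young perm(2)] unfolding hg by (simp add: wchar_eq_torus_char[OF comp])
qed simp

section \<open>Tensors as functions on pairs of permutations\<close>

definition ind_pair_space :: "nat \<Rightarrow> nat list \<Rightarrow> nat list \<Rightarrow> int list \<Rightarrow> int list
    \<Rightarrow> (wgrp \<times> wgrp \<Rightarrow> complex) set" where
  "ind_pair_space n la mu k k' = {\<Phi>.
     (\<forall>x y. (x \<notin> wreath n \<or> y \<notin> wreath n) \<longrightarrow> \<Phi> (x, y) = 0) \<and>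
     (\<forall>x\<in>wreath n. \<forall>y\<in>wreath n. \<Phi> (x, y) =
        torus_char la k (fst x) * torus_char mu k' (fst y) * \<Phi> (perm_mat (snd x), perm_mat (snd y))) \<and>
     (\<forall>\<kappa> \<kappa>' \<sigma> \<sigma>'. \<kappa> permutes {..<n} \<and> young_perm la \<kappa> \<and> \<kappa>' permutes {..<n} \<and> young_perm mu \<kappa>' \<and>
        \<sigma> permutes {..<n} \<and> \<sigma>' permutes {..<n} \<longrightarrow>
        \<Phi> (perm_mat (\<kappa> \<circ> \<sigma>), perm_mat (\<kappa>' \<circ> \<sigma>')) = \<Phi> (perm_mat \<sigma>, perm_mat \<sigma>'))}"

lemma ind_pair_space_vanishes:
  "\<Phi> \<in> ind_pair_space n la mu k k' \<Longrightarrow> \<not> (x \<in> wreath n \<and> y \<in> wreath n) \<Longrightarrow> \<Phi> (x, y) = 0"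
  unfolding ind_pair_space_def by blast

lemma ind_pair_space_torus_char:
  "\<Phi> \<in> ind_pair_space n la mu k k' \<Longrightarrow> x \<in> wreath n \<Longrightarrow> y \<in> wreath n \<Longrightarrow>
    \<Phi> (x, y) = torus_char la k (fst x) * torus_char mu k' (fst y) * \<Phi> (perm_mat (snd x), perm_mat (snd y))"
  unfolding ind_pair_space_def by blast

lemma ind_pair_space_young_invariant:
  "\<Phi> \<in> ind_pair_space n la mu k k' \<Longrightarrow> \<kappa> permutes {..<n} \<Longrightarrow> young_perm la \<kappa> \<Longrightarrow>
    \<kappa>' permutes {..<n} \<Longrightarrow> young_perm mu \<kappa>' \<Longrightarrow> \<sigma> permutes {..<n} \<Longrightarrow> \<sigma>' permutes {..<n} \<Longrightarrow>
    \<Phi> (perm_mat (\<kappa> \<circ> \<sigma>), perm_mat (\<kappa>' \<circ> \<sigma>')) = \<Phi> (perm_mat \<sigma>, perm_mat \<sigma>')"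
  unfolding ind_pair_space_def by blast

definition same_young_coset :: "nat list \<Rightarrow> (nat \<Rightarrow> nat) \<Rightarrow> (nat \<Rightarrow> nat) \<Rightarrow> bool" where
  "same_young_coset \<nu> \<sigma> \<alpha> \<longleftrightarrow> (\<forall>z. block_index \<nu> (\<sigma> z) = block_index \<nu> (\<alpha> z))"

definition young_coset_fun :: "nat \<Rightarrow> nat list \<Rightarrow> int list \<Rightarrow> (nat \<Rightarrow> nat) \<Rightarrow> wgrp \<Rightarrow> complex" where
  "young_coset_fun n \<nu> w \<alpha> = (\<lambda>x. if x \<in> wreath n
     then torus_char \<nu> w (fst x) * (if same_young_coset \<nu> (snd x) \<alpha> then 1 else 0) else 0)"

definition young_coset_card :: "nat \<Rightarrow> nat list \<Rightarrow> (nat \<Rightarrow> nat) \<Rightarrow> nat" where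
  "young_coset_card n \<nu> \<sigma> = card {\<alpha>. \<alpha> permutes {..<n} \<and> same_young_coset \<nu> \<sigma> \<alpha>}"

lemma young_coset_fun_in_ind_space:
  "is_composition \<nu> n \<Longrightarrow> young_coset_fun n \<nu> w \<alpha> \<in> ind_space n \<nu> w"
  unfolding young_coset_fun_def by (rule ind_spaceI) (auto simp: same_young_coset_def young_perm_def)

lemma same_young_coset_factor:
  assumes "\<sigma> permutes {..<n}" and "\<alpha> permutes {..<n}" and "same_young_coset \<nu> \<sigma> \<alpha>"
  shows "\<alpha> \<circ> inv \<sigma> permutes {..<n}" and "young_perm \<nu> (\<alpha> \<circ> inv \<sigma>)" and "\<alpha> \<circ> inv \<sigma> \<circ> \<sigma> = \<alpha>"
proof -
  show "\<alpha> \<circ> inv \<sigma> permutes {..<n}" using assms by (intro permutes_compose permutes_inv)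
  show "young_perm \<nu> (\<alpha> \<circ> inv \<sigma>)" unfolding young_perm_def
  proof
    fix z show "block_index \<nu> ((\<alpha> \<circ> inv \<sigma>) z) = block_index \<nu> z"
      using assms(3) permutes_inverses(1)[OF assms(1), of z]
      unfolding same_young_coset_def by (metis comp_apply)
  qed
  show "\<alpha> \<circ> inv \<sigma> \<circ> \<sigma> = \<alpha>" using permutes_inverses(2)[OF assms(1)] by (auto simp: fun_eq_iff)
qed

lemma young_coset_card_cong: "same_young_coset \<nu> \<sigma> \<alpha> \<Longrightarrow> young_coset_card n \<nu> \<alpha> = young_coset_card n \<nu> \<sigma>"
  unfolding young_coset_card_def same_young_coset_def by (rule arg_cong[where f = card]) auto

lemma young_coset_card_pos:
  assumes "\<sigma> permutes {..<n}"
  shows "young_coset_card n \<nu> \<sigma> > 0"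
proof -
  have "\<sigma> \<in> {\<alpha>. \<alpha> permutes {..<n} \<and> same_young_coset \<nu> \<sigma> \<alpha>}"
    using assms by (simp add: same_young_coset_def)
  moreover have "finite {\<alpha>. \<alpha> permutes {..<n} \<and> same_young_coset \<nu> \<sigma> \<alpha>}"
    by (rule finite_subset[OF _ finite_permutations[of "{..<n}"]]) auto
  ultimately show ?thesis unfolding young_coset_card_def by (auto simp: card_gt_0_iff)
qed

lemma tensor_space_sumI:
  assumes "finite I" and "\<And>i. i \<in> I \<Longrightarrow> \<phi> i \<in> V \<and> \<psi> i \<in> W"
  shows "(\<lambda>(x, y). \<Sum>i\<in>I. c i * \<phi> i x * \<psi> i y) \<in> tensor_space V W"
proof -
  obtain h where h: "bij_betw h {..<card I} I"
    using ex_bij_betw_nat_finite[OF assms(1)] by (auto simp: lessThan_atLeast0)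
  have "(\<Sum>i\<in>I. c i * \<phi> i x * \<psi> i y) = (\<Sum>j<card I. c (h j) * \<phi> (h j) x * \<psi> (h j) y)" for x y
    by (rule sum.reindex_bij_betw[OF h, symmetric])
  then show ?thesis
    using assms(2) bij_betwE[OF h] unfolding tensor_space_def
    by (intro CollectI exI[of _ "card I"] exI[of _ "c \<circ> h"] exI[of _ "\<phi> \<circ> h"] exI[of _ "\<psi> \<circ> h"]) auto
qed

context
  fixes n :: nat and la mu :: "nat list"
  assumes la: "is_composition la n" and mu: "is_composition mu n"
begin

lemma tensor_space_subset_ind_pair_space:
  "tensor_space (ind_space n la k) (ind_space n mu k') \<subseteq> ind_pair_space n la mu k k'"
proof
  fix \<Phi> assume "\<Phi> \<in> tensor_space (ind_space n la k) (ind_space n mu k')"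
  then obtain m c \<phi> \<psi> where mem: "\<forall>i<(m::nat). \<phi> i \<in> ind_space n la k \<and> \<psi> i \<in> ind_space n mu k'"
    and \<Phi>: "\<Phi> = (\<lambda>(x, y). \<Sum>i<m. (c :: nat \<Rightarrow> complex) i * \<phi> i x * \<psi> i y)"
    unfolding tensor_space_def by blast
  have "\<Phi> (x, y) = 0" if "x \<notin> wreath n \<or> y \<notin> wreath n" for x y
    unfolding \<Phi> using mem that by (auto simp: ind_space_vanishes intro!: sum.neutral)
  moreover have "\<Phi> (x, y) = torus_char la k (fst x) * torus_char mu k' (fst y)
      * \<Phi> (perm_mat (snd x), perm_mat (snd y))"
    if "x \<in> wreath n" and "y \<in> wreath n" for x y
  proof -
    obtain t \<sigma> t' \<sigma>' where xy: "x = (t, \<sigma>)" "y = (t', \<sigma>')" by fastforce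
    have "\<Phi> (x, y) = (\<Sum>i<m. torus_char la k t * torus_char mu k' t'
        * (c i * \<phi> i (perm_mat \<sigma>) * \<psi> i (perm_mat \<sigma>')))"
    proof -
      have "\<phi> i (t, \<sigma>) = torus_char la k t * \<phi> i (perm_mat \<sigma>)"
        and "\<psi> i (t', \<sigma>') = torus_char mu k' t' * \<psi> i (perm_mat \<sigma>')" if "i < m" for i
        using mem that \<open>x \<in> wreath n\<close> \<open>y \<in> wreath n\<close> unfolding xy
        by (auto intro: ind_space_torus_char[OF _ la] ind_space_torus_char[OF _ mu])
      then show ?thesis unfolding \<Phi> xy by (auto intro!: sum.cong)
    qed
    then show ?thesis unfolding \<Phi> xy by (simp add: sum_distrib_left)
  qed
  moreover have "\<Phi> (perm_mat (\<kappa> \<circ> \<sigma>), perm_mat (\<kappa>' \<circ> \<sigma>')) = \<Phi> (perm_mat \<sigma>, perm_mat \<sigma>')"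
    if "\<kappa> permutes {..<n}" "young_perm la \<kappa>" "\<kappa>' permutes {..<n}" "young_perm mu \<kappa>'"
      "\<sigma> permutes {..<n}" "\<sigma>' permutes {..<n}" for \<kappa> \<kappa>' \<sigma> \<sigma>'
    unfolding \<Phi> using mem that
    by (auto intro!: sum.cong simp: ind_space_young_invariant[OF _ la] ind_space_young_invariant[OF _ mu])
  ultimately show "\<Phi> \<in> ind_pair_space n la mu k k'" unfolding ind_pair_space_def by blast
qed

text \<open>Dividing by the sizes of the cosets compensates for summing over all their elements.\<close>

definition young_coset_coeff :: "(wgrp \<times> wgrp \<Rightarrow> complex) \<Rightarrow> (nat \<Rightarrow> nat) \<times> (nat \<Rightarrow> nat) \<Rightarrow> complex" where
  "young_coset_coeff \<Phi> p = \<Phi> (perm_mat (fst p), perm_mat (snd p))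
     / (of_nat (young_coset_card n la (fst p)) * of_nat (young_coset_card n mu (snd p)))"

lemma sum_young_coset_coeff:
  assumes \<Phi>: "\<Phi> \<in> ind_pair_space n la mu k k'" and perm: "\<sigma> permutes {..<n}" "\<sigma>' permutes {..<n}"
  defines "A \<equiv> {\<alpha>. \<alpha> permutes {..<n} \<and> same_young_coset la \<sigma> \<alpha>}"
    and "B \<equiv> {\<beta>. \<beta> permutes {..<n} \<and> same_young_coset mu \<sigma>' \<beta>}"
  shows "(\<Sum>p\<in>A \<times> B. young_coset_coeff \<Phi> p) = \<Phi> (perm_mat \<sigma>, perm_mat \<sigma>')"
proof -
  have "(\<Sum>p\<in>A \<times> B. young_coset_coeff \<Phi> p) = (\<Sum>p\<in>A \<times> B. \<Phi> (perm_mat \<sigma>, perm_mat \<sigma>')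
      / (of_nat (young_coset_card n la \<sigma>) * of_nat (young_coset_card n mu \<sigma>')))"
  proof (intro sum.cong refl)
    fix p assume "p \<in> A \<times> B"
    then obtain \<alpha> \<beta> where p: "p = (\<alpha>, \<beta>)" and \<alpha>: "\<alpha> permutes {..<n}" "same_young_coset la \<sigma> \<alpha>"
      and \<beta>: "\<beta> permutes {..<n}" "same_young_coset mu \<sigma>' \<beta>"
      unfolding A_def B_def by auto
    \<comment> \<open>\<open>(\<alpha>, \<beta>)\<close> lies in the \<open>S_la \<times> S_mu\<close>-orbit of \<open>(\<sigma>, \<sigma>')\<close>, on which \<open>\<Phi>\<close> is constant\<close>
    have "\<Phi> (perm_mat \<alpha>, perm_mat \<beta>)
        = \<Phi> (perm_mat (\<alpha> \<circ> inv \<sigma> \<circ> \<sigma>), perm_mat (\<beta> \<circ> inv \<sigma>' \<circ> \<sigma>'))"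
      using same_young_coset_factor(3)[OF perm(1) \<alpha>] same_young_coset_factor(3)[OF perm(2) \<beta>] by simp
    also have "\<dots> = \<Phi> (perm_mat \<sigma>, perm_mat \<sigma>')"
      by (rule ind_pair_space_young_invariant[OF \<Phi> same_young_coset_factor(1,2)[OF perm(1) \<alpha>]
            same_young_coset_factor(1,2)[OF perm(2) \<beta>] perm])
    finally show "young_coset_coeff \<Phi> p = \<Phi> (perm_mat \<sigma>, perm_mat \<sigma>')
        / (of_nat (young_coset_card n la \<sigma>) * of_nat (young_coset_card n mu \<sigma>'))"
      unfolding young_coset_coeff_def p
      using young_coset_card_cong[OF \<alpha>(2)] young_coset_card_cong[OF \<beta>(2)] by simp
  qed
  also have "\<dots> = \<Phi> (perm_mat \<sigma>, perm_mat \<sigma>')"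
  proof -
    have "card A = young_coset_card n la \<sigma>" "card B = young_coset_card n mu \<sigma>'"
      unfolding A_def B_def young_coset_card_def by simp_all
    then show ?thesis
      using young_coset_card_pos[OF perm(1), of la] young_coset_card_pos[OF perm(2), of mu]
      by (simp add: card_cartesian_product)
  qed
  finally show ?thesis .
qed

lemma ind_pair_space_coset_expansion:
  assumes \<Phi>: "\<Phi> \<in> ind_pair_space n la mu k k'"
  defines "Pm \<equiv> {\<sigma>. \<sigma> permutes {..<n}}"
  shows "\<Phi> = (\<lambda>(x, y). \<Sum>p\<in>Pm \<times> Pm.
      young_coset_coeff \<Phi> p * young_coset_fun n la k (fst p) x * young_coset_fun n mu k' (snd p) y)"
proof (intro ext, clarify)
  fix x y
  show "\<Phi> (x, y) = (\<Sum>p\<in>Pm \<times> Pm.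
      young_coset_coeff \<Phi> p * young_coset_fun n la k (fst p) x * young_coset_fun n mu k' (snd p) y)"
  proof (cases "x \<in> wreath n \<and> y \<in> wreath n")
    case False
    then have "\<Phi> (x, y) = 0" by (rule ind_pair_space_vanishes[OF \<Phi>])
    then show ?thesis using False by (auto simp: young_coset_fun_def)
  next
    case True
    obtain t \<sigma> t' \<sigma>' where xy: "x = (t, \<sigma>)" "y = (t', \<sigma>')" by fastforce
    have perm: "\<sigma> permutes {..<n}" "\<sigma>' permutes {..<n}" using True xy by (auto simp: wreath_def)
    let ?A = "{\<alpha>. \<alpha> permutes {..<n} \<and> same_young_coset la \<sigma> \<alpha>}"
    let ?B = "{\<beta>. \<beta> permutes {..<n} \<and> same_young_coset mu \<sigma>' \<beta>}"
    have "(\<Sum>p\<in>Pm \<times> Pm.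
        young_coset_coeff \<Phi> p * young_coset_fun n la k (fst p) x * young_coset_fun n mu k' (snd p) y)
      = torus_char la k t * torus_char mu k' t' * (\<Sum>p\<in>Pm \<times> Pm.
          if same_young_coset la \<sigma> (fst p) \<and> same_young_coset mu \<sigma>' (snd p) then young_coset_coeff \<Phi> p else 0)"
      unfolding sum_distrib_left using True xy by (intro sum.cong refl) (auto simp: young_coset_fun_def)
    also have "(\<Sum>p\<in>Pm \<times> Pm.
        if same_young_coset la \<sigma> (fst p) \<and> same_young_coset mu \<sigma>' (snd p) then young_coset_coeff \<Phi> p else 0)
      = (\<Sum>p\<in>?A \<times> ?B. young_coset_coeff \<Phi> p)"
    proof -
      have "?A \<times> ?B = {p \<in> Pm \<times> Pm. same_young_coset la \<sigma> (fst p) \<and> same_young_coset mu \<sigma>' (snd p)}"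
        unfolding Pm_def by auto
      then show ?thesis by (simp add: sum.inter_filter Pm_def finite_permutations)
    qed
    also have "\<dots> = \<Phi> (perm_mat \<sigma>, perm_mat \<sigma>')" by (rule sum_young_coset_coeff[OF \<Phi> perm])
    finally show ?thesis
      using ind_pair_space_torus_char[OF \<Phi> True[THEN conjunct1] True[THEN conjunct2]] unfolding xy by simp
  qed
qed

lemma ind_pair_space_subset_tensor_space:
  "ind_pair_space n la mu k k' \<subseteq> tensor_space (ind_space n la k) (ind_space n mu k')"
proof
  fix \<Phi> assume \<Phi>: "\<Phi> \<in> ind_pair_space n la mu k k'"
  show "\<Phi> \<in> tensor_space (ind_space n la k) (ind_space n mu k')"
    by (subst ind_pair_space_coset_expansion[OF \<Phi>], rule tensor_space_sumI)
       (auto simp: young_coset_fun_in_ind_space la mu finite_permutations)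
qed

lemma tensor_space_Mperm_eq:
  "tensor_space (Mperm la k) (Mperm mu k') = ind_pair_space n la mu k k'"
proof -
  have "sum_list la = n" "sum_list mu = n" using la mu by (simp_all add: is_composition_def)
  then show ?thesis unfolding Mperm_def
    by (simp add: subset_antisym tensor_space_subset_ind_pair_space ind_pair_space_subset_tensor_space)
qed

end

definition nonzero_cells :: "nat \<Rightarrow> nat \<Rightarrow> (nat \<Rightarrow> nat \<Rightarrow> nat) \<Rightarrow> (nat \<times> nat) list" where
  "nonzero_cells p q B = [(a, b). a \<leftarrow> [0..<p], b \<leftarrow> [0..<q], B a b \<noteq> 0]"

lemma mat_comp_eq_map_nonzero_cells: "mat_comp p q B = map (\<lambda>(a, b). B a b) (nonzero_cells p q B)"
  unfolding mat_comp_def nonzero_cells_def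
  by (auto simp: map_concat comp_def intro!: arg_cong[where f = concat] map_cong)

lemma mat_wts_eq_map_nonzero_cells:
  "mat_wts p q B k k' = map (\<lambda>(a, b). k ! a + k' ! b) (nonzero_cells p q B)"
  unfolding mat_wts_def nonzero_cells_def
  by (auto simp: map_concat comp_def intro!: arg_cong[where f = concat] map_cong)

lemma set_nonzero_cells: "set (nonzero_cells p q B) = {(a, b). a < p \<and> b < q \<and> B a b \<noteq> 0}"
  unfolding nonzero_cells_def by auto

lemma nonzero_cells_Suc:
  "nonzero_cells (Suc p) q B = nonzero_cells p q B @ map (\<lambda>b. (p, b)) (filter (\<lambda>b. B p b \<noteq> 0) [0..<q])"
  unfolding nonzero_cells_def by (induction q) auto

lemma distinct_nonzero_cells: "distinct (nonzero_cells p q B)"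
  by (induction p) (auto simp: nonzero_cells_def[of 0] nonzero_cells_Suc set_nonzero_cells
      distinct_map inj_on_def)

lemma sorted_fst_nonzero_cells: "sorted (map fst (nonzero_cells p q B))"
  by (induction p) (auto simp: nonzero_cells_def[of 0] nonzero_cells_Suc set_nonzero_cells
      sorted_append comp_def map_replicate_const)

lemma Tmat_outside: "B \<in> Tmat la mu \<Longrightarrow> \<not> (a < length la \<and> b < length mu) \<Longrightarrow> B a b = 0"
  unfolding Tmat_def by auto

lemma Tmat_row_sum: "B \<in> Tmat la mu \<Longrightarrow> a < length la \<Longrightarrow> (\<Sum>b<length mu. B a b) = la ! a"
  unfolding Tmat_def by auto

lemma Tmat_col_sum: "B \<in> Tmat la mu \<Longrightarrow> b < length mu \<Longrightarrow> (\<Sum>a<length la. B a b) = mu ! b"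
  unfolding Tmat_def by auto

context
  fixes n :: nat and la mu :: "nat list"
  assumes la: "is_composition la n" and mu: "is_composition mu n"
begin

abbreviation cells :: "(nat \<Rightarrow> nat \<Rightarrow> nat) \<Rightarrow> (nat \<times> nat) list" where
  "cells B \<equiv> nonzero_cells (length la) (length mu) B"

abbreviation cell_comp :: "(nat \<Rightarrow> nat \<Rightarrow> nat) \<Rightarrow> nat list" where
  "cell_comp B \<equiv> mat_comp (length la) (length mu) B"

abbreviation cell_wts :: "(nat \<Rightarrow> nat \<Rightarrow> nat) \<Rightarrow> int list \<Rightarrow> int list \<Rightarrow> int list" where
  "cell_wts B k k' \<equiv> mat_wts (length la) (length mu) B k k'"

abbreviation cell_of :: "(nat \<Rightarrow> nat \<Rightarrow> nat) \<Rightarrow> nat \<Rightarrow> nat \<times> nat" where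
  "cell_of B i \<equiv> cells B ! block_index (cell_comp B) i"

lemma sum_cells:
  assumes "B \<in> Tmat la mu"
  shows "(\<Sum>x\<in>{x\<in>set (cells B). P x}. (\<lambda>(a, b). B a b) x)
       = (\<Sum>x\<in>{x\<in>{..<length la} \<times> {..<length mu}. P x}. (\<lambda>(a, b). B a b) x)"
  by (rule sum.mono_neutral_left) (auto simp: set_nonzero_cells)

lemma is_composition_cell_comp:
  assumes B: "B \<in> Tmat la mu"
  shows "is_composition (cell_comp B) n"
proof -
  have "sum_list (cell_comp B) = (\<Sum>x\<in>set (cells B). (\<lambda>(a, b). B a b) x)"
    unfolding mat_comp_eq_map_nonzero_cells
    by (rule sum_list_distinct_conv_sum_set[OF distinct_nonzero_cells])
  also have "\<dots> = (\<Sum>x\<in>{..<length la} \<times> {..<length mu}. (\<lambda>(a, b). B a b) x)"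
    using sum_cells[OF B, of "\<lambda>_. True"] by simp
  also have "\<dots> = (\<Sum>a<length la. \<Sum>b<length mu. B a b)"
    by (simp add: sum.cartesian_product)
  also have "\<dots> = (\<Sum>a<length la. la ! a)" using Tmat_row_sum[OF B] by simp
  also have "\<dots> = n" using la by (simp add: is_composition_def sum_list_sum_nth atLeast0LessThan)
  finally show ?thesis
    by (auto simp: is_composition_def mat_comp_eq_map_nonzero_cells set_nonzero_cells)
qed

lemma cell_of_less:
  "B \<in> Tmat la mu \<Longrightarrow> i < n \<Longrightarrow> block_index (cell_comp B) i < length (cells B)"
  using block_index_less[OF is_composition_cell_comp] by (simp add: mat_comp_eq_map_nonzero_cells)

lemma card_cell_of_fiber:
  assumes B: "B \<in> Tmat la mu"
  shows "card {i. i < n \<and> g (cell_of B i) = v}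
       = (\<Sum>x\<in>{x\<in>{..<length la} \<times> {..<length mu}. g x = v}. (\<lambda>(a, b). B a b) x)"
proof -
  have comp: "is_composition (cell_comp B) n" by (rule is_composition_cell_comp[OF B])
  let ?R = "{r. r < length (cells B) \<and> g (cells B ! r) = v}"
  have "{i. i < n \<and> g (cell_of B i) = v} = (\<Union>r\<in>?R. {i. i < n \<and> block_index (cell_comp B) i = r})"
    using cell_of_less[OF B] by auto
  then have "card {i. i < n \<and> g (cell_of B i) = v}
      = (\<Sum>r\<in>?R. card {i. i < n \<and> block_index (cell_comp B) i = r})"
    by (simp only:) (rule card_UN_disjoint, auto)
  also have "\<dots> = (\<Sum>r\<in>?R. (\<lambda>(a, b). B a b) (cells B ! r))"
    using card_block_index_fiber[OF comp] by (intro sum.cong refl) (auto simp: mat_comp_eq_map_nonzero_cells)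
  also have "\<dots> = (\<Sum>x\<in>{x\<in>set (cells B). g x = v}. (\<lambda>(a, b). B a b) x)"
  proof -
    have "inj_on (nth (cells B)) ?R" by (rule inj_on_nth[OF distinct_nonzero_cells]) auto
    moreover have "nth (cells B) ` ?R = {x\<in>set (cells B). g x = v}"
      by (force simp: in_set_conv_nth image_iff)
    ultimately show ?thesis by (metis (no_types, lifting) sum.reindex_cong)
  qed
  also have "\<dots> = (\<Sum>x\<in>{x\<in>{..<length la} \<times> {..<length mu}. g x = v}. (\<lambda>(a, b). B a b) x)"
    by (rule sum_cells[OF B])
  finally show ?thesis .
qed

lemma card_fst_cell_of_fiber:
  assumes B: "B \<in> Tmat la mu"
  shows "card {i. i < n \<and> fst (cell_of B i) = a} = card {i. i < n \<and> block_index la i = a}"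
proof -
  have "{x\<in>{..<length la} \<times> {..<length mu}. fst x = a} = (if a < length la then {a} \<times> {..<length mu} else {})"
    by auto
  then have "(\<Sum>x\<in>{x\<in>{..<length la} \<times> {..<length mu}. fst x = a}. (\<lambda>(a, b). B a b) x)
      = (if a < length la then la ! a else 0)"
    using Tmat_row_sum[OF B, of a] sum.cartesian_product[of "\<lambda>x y. B x y" "{..<length mu}" "{a}", symmetric]
    by simp
  then show ?thesis using card_cell_of_fiber[OF B, of fst a] card_block_index_fiber[OF la] by simp
qed

lemma card_snd_cell_of_fiber:
  assumes B: "B \<in> Tmat la mu"
  shows "card {i. i < n \<and> snd (cell_of B i) = b} = card {i. i < n \<and> block_index mu i = b}"
proof -
  have "{x\<in>{..<length la} \<times> {..<length mu}. snd x = b} = (if b < length mu then {..<length la} \<times> {b} else {})"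
    by auto
  then have "(\<Sum>x\<in>{x\<in>{..<length la} \<times> {..<length mu}. snd x = b}. (\<lambda>(a, b). B a b) x)
      = (if b < length mu then mu ! b else 0)"
    using Tmat_col_sum[OF B, of b] sum.cartesian_product[of "\<lambda>x y. B x y" "{b}" "{..<length la}", symmetric]
    by simp
  then show ?thesis using card_cell_of_fiber[OF B, of snd b] card_block_index_fiber[OF mu] by simp
qed

text \<open>The cells are listed row by row, so both sides are monotone in \<open>i\<close>; their fibres have the
  sizes \<open>la ! a\<close>.\<close>

lemma fst_cell_of:
  assumes B: "B \<in> Tmat la mu" and i: "i < n"
  shows "fst (cell_of B i) = block_index la i"
proof (rule mono_eq_if_card_fibers_eq[OF _ _ _ i])
  show "fst (cell_of B x) \<le> fst (cell_of B y)" if "x \<le> y" "y < n" for x y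
    using sorted_nth_mono[OF sorted_fst_nonzero_cells] cell_of_less[OF B that(2)] block_index_mono[OF that(1)]
    by fastforce
qed (use block_index_mono card_fst_cell_of_fiber[OF B] in auto)

section \<open>Double cosets of Young subgroups\<close>

definition double_coset_matrix :: "(nat \<Rightarrow> nat) \<Rightarrow> nat \<Rightarrow> nat \<Rightarrow> nat" where
  "double_coset_matrix \<gamma> a b = card {i. i < n \<and> block_index la i = a \<and> block_index mu (\<gamma> i) = b}"

lemma double_coset_matrix_outside:
  assumes g: "\<gamma> permutes {..<n}" and outside: "length la \<le> a \<or> length mu \<le> b"
  shows "double_coset_matrix \<gamma> a b = 0"
proof -
  have "block_index la i < length la" and "block_index mu (\<gamma> i) < length mu" if "i < n" for i
    using block_index_less[OF la that] block_index_less[OF mu] permutes_less_iff[OF g] that by simp_all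
  then have "{i. i < n \<and> block_index la i = a \<and> block_index mu (\<gamma> i) = b} = {}"
    using outside by (blast dest: leD)
  then show ?thesis by (simp add: double_coset_matrix_def)
qed

lemma double_coset_matrix_row_sum:
  assumes g: "\<gamma> permutes {..<n}" and a: "a < length la"
  shows "(\<Sum>b<length mu. double_coset_matrix \<gamma> a b) = la ! a"
proof -
  let ?S = "{i. i < n \<and> block_index la i = a}"
  have "(\<Sum>b<length mu. double_coset_matrix \<gamma> a b)
      = (\<Sum>b<length mu. card {i \<in> ?S. block_index mu (\<gamma> i) = b})"
    unfolding double_coset_matrix_def by (intro sum.cong refl arg_cong[where f = card]) auto
  also have "\<dots> = card ?S"
    by (rule card_eq_sum_card_fibers[symmetric]) (use block_index_less[OF mu] permutes_less_iff[OF g] in auto)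
  also have "\<dots> = la ! a" using card_block_index_fiber[OF la] a by simp
  finally show ?thesis .
qed

lemma double_coset_matrix_col_sum:
  assumes g: "\<gamma> permutes {..<n}" and b: "b < length mu"
  shows "(\<Sum>a<length la. double_coset_matrix \<gamma> a b) = mu ! b"
proof -
  let ?S = "{i. i < n \<and> block_index mu (\<gamma> i) = b}"
  have "(\<Sum>a<length la. double_coset_matrix \<gamma> a b) = (\<Sum>a<length la. card {i \<in> ?S. block_index la i = a})"
    unfolding double_coset_matrix_def by (intro sum.cong refl arg_cong[where f = card]) auto
  also have "\<dots> = card ?S"
    by (rule card_eq_sum_card_fibers[symmetric]) (use block_index_less[OF la] in auto)
  also have "\<dots> = card (\<gamma> ` ?S)"
    using card_image[OF inj_on_subset[OF permutes_inj[OF g] subset_UNIV]] by simp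
  also have "\<gamma> ` ?S = {j. j < n \<and> block_index mu j = b}"
  proof (intro set_eqI iffI)
    fix j assume "j \<in> {j. j < n \<and> block_index mu j = b}"
    then have "inv \<gamma> j \<in> ?S" and "\<gamma> (inv \<gamma> j) = j"
      using permutes_less_iff[OF permutes_inv[OF g]] permutes_inverses(1)[OF g] by auto
    then show "j \<in> \<gamma> ` ?S" by (metis imageI)
  qed (use permutes_less_iff[OF g] in auto)
  also have "card \<dots> = mu ! b" using card_block_index_fiber[OF mu] b by simp
  finally show ?thesis .
qed

lemma double_coset_matrix_in_Tmat: "\<gamma> permutes {..<n} \<Longrightarrow> double_coset_matrix \<gamma> \<in> Tmat la mu"
  unfolding Tmat_def
  by (auto simp: double_coset_matrix_outside double_coset_matrix_row_sum double_coset_matrix_col_sum)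

lemma double_coset_matrix_cong:
  assumes \<kappa>: "\<kappa> permutes {..<n}" "young_perm la \<kappa>" and \<kappa>': "young_perm mu \<kappa>'"
  shows "double_coset_matrix (\<kappa>' \<circ> \<gamma> \<circ> inv \<kappa>) = double_coset_matrix \<gamma>"
proof (intro ext)
  fix a b
  let ?S = "{j. j < n \<and> block_index la j = a \<and> block_index mu (\<gamma> j) = b}"
  have "{i. i < n \<and> block_index la i = a \<and> block_index mu ((\<kappa>' \<circ> \<gamma> \<circ> inv \<kappa>) i) = b} = \<kappa> ` ?S"
  proof (intro set_eqI iffI)
    fix i assume i: "i \<in> {i. i < n \<and> block_index la i = a \<and> block_index mu ((\<kappa>' \<circ> \<gamma> \<circ> inv \<kappa>) i) = b}"
    have "block_index la (inv \<kappa> i) = block_index la i"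
      using \<kappa>(2) permutes_inverses(1)[OF \<kappa>(1), of i] unfolding young_perm_def by metis
    moreover have "block_index mu (\<gamma> (inv \<kappa> i)) = b" and "inv \<kappa> i < n"
      using i \<kappa>' permutes_less_iff[OF permutes_inv[OF \<kappa>(1)]] unfolding young_perm_def by auto
    ultimately have "inv \<kappa> i \<in> ?S" using i by simp
    then show "i \<in> \<kappa> ` ?S" using permutes_inverses(1)[OF \<kappa>(1), of i] by (metis imageI)
  next
    fix i assume "i \<in> \<kappa> ` ?S"
    then obtain j where "j \<in> ?S" and "i = \<kappa> j" by auto
    then show "i \<in> {i. i < n \<and> block_index la i = a \<and> block_index mu ((\<kappa>' \<circ> \<gamma> \<circ> inv \<kappa>) i) = b}"
      using permutes_less_iff[OF \<kappa>(1)] \<kappa>(2) \<kappa>' permutes_inverses(2)[OF \<kappa>(1)]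
      by (simp add: young_perm_def)
  qed
  then show "double_coset_matrix (\<kappa>' \<circ> \<gamma> \<circ> inv \<kappa>) a b = double_coset_matrix \<gamma> a b"
    unfolding double_coset_matrix_def
    using card_image[OF inj_on_subset[OF permutes_inj[OF \<kappa>(1)] subset_UNIV]] by simp
qed

lemma double_coset_matrix_eqD:
  assumes g: "\<gamma> permutes {..<n}" and p: "\<pi> permutes {..<n}"
    and eq: "double_coset_matrix \<gamma> = double_coset_matrix \<pi>"
  obtains \<alpha> \<beta> where "\<alpha> permutes {..<n}" "young_perm la \<alpha>" "\<beta> permutes {..<n}" "young_perm mu \<beta>"
    and "\<gamma> = \<beta> \<circ> \<pi> \<circ> inv \<alpha>"
proof -
  have "card {i. i < n \<and> (block_index la i, block_index mu (\<pi> i)) = v}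
      = card {i. i < n \<and> (block_index la i, block_index mu (\<gamma> i)) = v}" for v
    using fun_cong[OF fun_cong[OF eq, of "fst v"], of "snd v"]
    by (cases v) (simp add: double_coset_matrix_def)
  then obtain \<alpha> where \<alpha>: "\<alpha> permutes {..<n}"
    and labels: "\<And>i. i < n \<Longrightarrow> (block_index la (\<alpha> i), block_index mu (\<gamma> (\<alpha> i)))
                                  = (block_index la i, block_index mu (\<pi> i))"
    by (rule permutation_matching_labels) blast
  have "young_perm la \<alpha>" unfolding young_perm_def
  proof
    fix i show "block_index la (\<alpha> i) = block_index la i"
      using labels[of i] permutes_not_in[OF \<alpha>, of i] by (cases "i < n") auto
  qed
  define \<beta> where "\<beta> = \<gamma> \<circ> \<alpha> \<circ> inv \<pi>"
  have \<beta>: "\<beta> permutes {..<n}" unfolding \<beta>_def using g \<alpha> p by (intro permutes_compose permutes_inv)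
  have "young_perm mu \<beta>" unfolding young_perm_def
  proof
    fix z show "block_index mu (\<beta> z) = block_index mu z"
    proof (cases "z < n")
      case True
      then show ?thesis
        using labels[of "inv \<pi> z"] permutes_less_iff[OF permutes_inv[OF p]] permutes_inverses(1)[OF p]
        by (simp add: \<beta>_def)
    qed (simp add: permutes_not_in[OF \<beta>])
  qed
  moreover have "\<gamma> = \<beta> \<circ> \<pi> \<circ> inv \<alpha>"
    unfolding \<beta>_def using permutes_inverses[OF p] permutes_inverses[OF \<alpha>] by (auto simp: fun_eq_iff)
  ultimately show ?thesis using that \<alpha> \<beta> \<open>young_perm la \<alpha>\<close> by blast
qed

text \<open>Choosing the representative of the double coset compatibly with the blocks of \<open>cell_comp B\<close>
  makes its stabiliser \<open>S_la \<inter> \<pi>\<^sup>-\<^sup>1 S_mu \<pi>\<close> the Young subgroup of \<open>cell_comp B\<close>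
  (see \<open>young_perm_cell_comp_iff\<close>).\<close>

lemma ex_cell_perm:
  assumes B: "B \<in> Tmat la mu"
  shows "\<exists>\<pi>. \<pi> permutes {..<n} \<and> double_coset_matrix \<pi> = B \<and>
     (\<forall>i<n. cell_of B i = (block_index la i, block_index mu (\<pi> i)))"
proof -
  obtain \<pi> where \<pi>: "\<pi> permutes {..<n}"
    and snd_cell: "\<And>i. i < n \<Longrightarrow> block_index mu (\<pi> i) = snd (cell_of B i)"
    using card_snd_cell_of_fiber[OF B] by (rule permutation_matching_labels) (metis (no_types))
  have cell: "cell_of B i = (block_index la i, block_index mu (\<pi> i))" if "i < n" for i
    using fst_cell_of[OF B that] snd_cell[OF that] by (metis prod.collapse)
  have "double_coset_matrix \<pi> a b = B a b" for a b
  proof -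
    have "double_coset_matrix \<pi> a b = card {i. i < n \<and> cell_of B i = (a, b)}"
      unfolding double_coset_matrix_def by (intro arg_cong[where f = card]) (auto simp: cell)
    also have "\<dots> = (\<Sum>x\<in>{x\<in>{..<length la} \<times> {..<length mu}. x = (a, b)}. (\<lambda>(a, b). B a b) x)"
      using card_cell_of_fiber[OF B, of "\<lambda>x. x" "(a, b)"] by simp
    also have "\<dots> = B a b"
    proof (cases "a < length la \<and> b < length mu")
      case True
      then have "{x\<in>{..<length la} \<times> {..<length mu}. x = (a, b)} = {(a, b)}" by auto
      then show ?thesis by simp
    next
      case False
      then have "{x\<in>{..<length la} \<times> {..<length mu}. x = (a, b)} = {}" by auto
      then show ?thesis using Tmat_outside[OF B False] by simp
    qed
    finally show ?thesis .
  qed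
  then show ?thesis using \<pi> cell by blast
qed

definition cell_perm :: "(nat \<Rightarrow> nat \<Rightarrow> nat) \<Rightarrow> nat \<Rightarrow> nat" where
  "cell_perm B = (SOME \<pi>. \<pi> permutes {..<n} \<and> double_coset_matrix \<pi> = B \<and>
     (\<forall>i<n. cell_of B i = (block_index la i, block_index mu (\<pi> i))))"

lemma
  assumes "B \<in> Tmat la mu"
  shows cell_perm_permutes: "cell_perm B permutes {..<n}"
    and double_coset_matrix_cell_perm: "double_coset_matrix (cell_perm B) = B"
    and cell_of_eq: "i < n \<Longrightarrow> cell_of B i = (block_index la i, block_index mu (cell_perm B i))"
  using someI_ex[OF ex_cell_perm[OF assms]] unfolding cell_perm_def by auto

lemma young_perm_cell_comp_iff_cell_of:
  assumes B: "B \<in> Tmat la mu" and z: "\<zeta> permutes {..<n}"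
  shows "young_perm (cell_comp B) \<zeta> \<longleftrightarrow> (\<forall>x<n. cell_of B (\<zeta> x) = cell_of B x)"
proof -
  have same_cell: "block_index (cell_comp B) (\<zeta> x) = block_index (cell_comp B) x
      \<longleftrightarrow> cell_of B (\<zeta> x) = cell_of B x" if "x < n" for x
  proof -
    have "block_index (cell_comp B) (\<zeta> x) < length (cells B)" "block_index (cell_comp B) x < length (cells B)"
      using cell_of_less[OF B] that permutes_less_iff[OF z] by auto
    then show ?thesis by (simp add: nth_eq_iff_index_eq[OF distinct_nonzero_cells])
  qed
  show ?thesis unfolding young_perm_def
  proof (intro iffI allI impI)
    fix x assume "\<forall>x. block_index (cell_comp B) (\<zeta> x) = block_index (cell_comp B) x" and "x < n"
    then show "cell_of B (\<zeta> x) = cell_of B x" using same_cell by blast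
  next
    fix x assume "\<forall>x<n. cell_of B (\<zeta> x) = cell_of B x"
    then show "block_index (cell_comp B) (\<zeta> x) = block_index (cell_comp B) x"
      using same_cell permutes_not_in[OF z, of x] by (cases "x < n") auto
  qed
qed

lemma young_perm_cell_comp_iff:
  assumes B: "B \<in> Tmat la mu" and z: "\<zeta> permutes {..<n}"
  shows "young_perm (cell_comp B) \<zeta> \<longleftrightarrow>
    young_perm la \<zeta> \<and> young_perm mu (cell_perm B \<circ> \<zeta> \<circ> inv (cell_perm B))"
proof -
  let ?\<pi> = "cell_perm B"
  have p: "?\<pi> permutes {..<n}" by (rule cell_perm_permutes[OF B])
  have cell: "cell_of B (\<zeta> x) = cell_of B x \<longleftrightarrow>
      block_index la (\<zeta> x) = block_index la x \<and> block_index mu (?\<pi> (\<zeta> x)) = block_index mu (?\<pi> x)"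
    if "x < n" for x
    using cell_of_eq[OF B] that permutes_less_iff[OF z] by simp
  show ?thesis unfolding young_perm_cell_comp_iff_cell_of[OF B z]
  proof (intro iffI conjI)
    assume cells: "\<forall>x<n. cell_of B (\<zeta> x) = cell_of B x"
    show "young_perm la \<zeta>" unfolding young_perm_def
    proof
      fix x show "block_index la (\<zeta> x) = block_index la x"
        using cells cell permutes_not_in[OF z, of x] by (cases "x < n") auto
    qed
    show "young_perm mu (?\<pi> \<circ> \<zeta> \<circ> inv ?\<pi>)" unfolding young_perm_def
    proof
      fix y show "block_index mu ((?\<pi> \<circ> \<zeta> \<circ> inv ?\<pi>) y) = block_index mu y"
      proof (cases "y < n")
        case True
        then have "inv ?\<pi> y < n" using permutes_less_iff[OF permutes_inv[OF p]] by simp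
        then show ?thesis using cells cell permutes_inverses(1)[OF p] by simp
      next
        case False
        then show ?thesis
          using permutes_not_in[OF permutes_inv[OF p]] permutes_not_in[OF z] permutes_not_in[OF p] by simp
      qed
    qed
  next
    assume "young_perm la \<zeta> \<and> young_perm mu (?\<pi> \<circ> \<zeta> \<circ> inv ?\<pi>)"
    then have "block_index la (\<zeta> x) = block_index la x"
      and "block_index mu (?\<pi> (\<zeta> (inv ?\<pi> (?\<pi> x)))) = block_index mu (?\<pi> x)" for x
      unfolding young_perm_def by auto
    then show "\<forall>x<n. cell_of B (\<zeta> x) = cell_of B x"
      using cell permutes_inverses(2)[OF p] by simp
  qed
qed

text \<open>This is where the weights \<open>k ! a + k' ! b\<close> of the cells come from.\<close>

lemma torus_char_cell_comp:
  assumes B: "B \<in> Tmat la mu" and t: "\<And>i. i < n \<Longrightarrow> t i \<noteq> 0"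
  shows "torus_char (cell_comp B) (cell_wts B k k') t
       = torus_char la k t * torus_char mu k' (\<lambda>i. t (inv (cell_perm B) i))"
proof -
  let ?\<pi> = "cell_perm B"
  have p: "?\<pi> permutes {..<n}" by (rule cell_perm_permutes[OF B])
  have n: "sum_list la = n" "sum_list mu = n" "sum_list (cell_comp B) = n"
    using la mu is_composition_cell_comp[OF B] by (simp_all add: is_composition_def)
  have w: "cell_wts B k k' ! block_index (cell_comp B) j = k ! block_index la j + k' ! block_index mu (?\<pi> j)"
    if "j < n" for j
    using cell_of_eq[OF B that] cell_of_less[OF B that] by (simp add: mat_wts_eq_map_nonzero_cells)
  have "torus_char (cell_comp B) (cell_wts B k k') t
      = (\<Prod>j<n. t j powi (k ! block_index la j) * t j powi (k' ! block_index mu (?\<pi> j)))"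
    unfolding torus_char_def n using w t by (intro prod.cong refl) (simp add: power_int_add)
  also have "\<dots> = torus_char la k t * (\<Prod>j<n. t j powi (k' ! block_index mu (?\<pi> j)))"
    by (simp add: prod.distrib torus_char_def n)
  also have "(\<Prod>j<n. t j powi (k' ! block_index mu (?\<pi> j))) = torus_char mu k' (\<lambda>i. t (inv ?\<pi> i))"
    unfolding torus_char_def n
    using prod.reindex_bij_betw[OF permutes_imp_bij[OF p], of "\<lambda>j. t (inv ?\<pi> j) powi (k' ! block_index mu j)"]
    by (simp add: permutes_inverses(2)[OF p])
  finally show ?thesis .
qed

section \<open>The Mackey isomorphism\<close>

lemma dsum_space_vanishes: "\<Psi> \<in> dsum_space la mu k k' \<Longrightarrow> B \<notin> Tmat la mu \<Longrightarrow> \<Psi> (B, x) = 0"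
  unfolding dsum_space_def by blast

lemma dsum_space_component:
  "\<Psi> \<in> dsum_space la mu k k' \<Longrightarrow> B \<in> Tmat la mu \<Longrightarrow>
    (\<lambda>x. \<Psi> (B, x)) \<in> ind_space n (cell_comp B) (cell_wts B k k')"
  using is_composition_cell_comp unfolding dsum_space_def Mperm_def is_composition_def by auto

text \<open>Write \<open>\<sigma>' \<circ> inv \<sigma> = \<beta> \<circ> cell_perm B \<circ> inv \<alpha>\<close> with \<open>\<alpha>\<close>, \<open>\<beta>\<close> in the Young subgroups of \<open>la\<close>, \<open>mu\<close>;
  the value below does not depend on the choice of \<open>\<alpha>\<close>.\<close>

definition double_coset_value :: "((nat \<Rightarrow> nat \<Rightarrow> nat) \<times> wgrp \<Rightarrow> complex) \<Rightarrow> (nat \<Rightarrow> nat) \<Rightarrow> (nat \<Rightarrow> nat) \<Rightarrow> complex" where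
  "double_coset_value \<Psi> \<sigma> \<sigma>' = (let B = double_coset_matrix (\<sigma>' \<circ> inv \<sigma>);
     \<alpha> = (SOME \<alpha>. \<alpha> permutes {..<n} \<and> young_perm la \<alpha> \<and>
            (\<exists>\<beta>. \<beta> permutes {..<n} \<and> young_perm mu \<beta> \<and> \<sigma>' \<circ> inv \<sigma> = \<beta> \<circ> cell_perm B \<circ> inv \<alpha>))
   in \<Psi> (B, perm_mat (inv \<alpha> \<circ> \<sigma>)))"

definition mackey_map :: "(wgrp \<times> wgrp \<Rightarrow> complex) \<Rightarrow> (nat \<Rightarrow> nat \<Rightarrow> nat) \<times> wgrp \<Rightarrow> complex" where
  "mackey_map \<Phi> = (\<lambda>(B, x). if B \<in> Tmat la mu \<and> x \<in> wreath n
     then \<Phi> (x, wmult (perm_mat (cell_perm B)) x) else 0)"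

definition mackey_inv :: "int list \<Rightarrow> int list \<Rightarrow> ((nat \<Rightarrow> nat \<Rightarrow> nat) \<times> wgrp \<Rightarrow> complex) \<Rightarrow> wgrp \<times> wgrp \<Rightarrow> complex" where
  "mackey_inv k k' \<Psi> = (\<lambda>(x, y). if x \<in> wreath n \<and> y \<in> wreath n
     then torus_char la k (fst x) * torus_char mu k' (fst y) * double_coset_value \<Psi> (snd x) (snd y) else 0)"

lemma dsum_space_decomposition_indep:
  assumes \<Psi>: "\<Psi> \<in> dsum_space la mu k k'" and B: "B \<in> Tmat la mu" and \<sigma>: "\<sigma> permutes {..<n}"
    and \<alpha>: "\<alpha> permutes {..<n}" "young_perm la \<alpha>" and \<beta>: "\<beta> permutes {..<n}" "young_perm mu \<beta>"
    and \<alpha>0: "\<alpha>0 permutes {..<n}" "young_perm la \<alpha>0" and \<beta>0: "\<beta>0 permutes {..<n}" "young_perm mu \<beta>0"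
    and eq: "\<beta>0 \<circ> cell_perm B \<circ> inv \<alpha>0 = \<beta> \<circ> cell_perm B \<circ> inv \<alpha>"
  shows "\<Psi> (B, perm_mat (inv \<alpha>0 \<circ> \<sigma>)) = \<Psi> (B, perm_mat (inv \<alpha> \<circ> \<sigma>))"
proof -
  let ?\<pi> = "cell_perm B"
  have \<pi>: "?\<pi> permutes {..<n}" by (rule cell_perm_permutes[OF B])
  \<comment> \<open>the two choices differ by \<open>\<zeta>\<close>, which lies in the stabiliser of \<open>cell_perm B\<close>\<close>
  define \<zeta> where "\<zeta> = inv \<alpha>0 \<circ> \<alpha>"
  have \<zeta>: "\<zeta> permutes {..<n}" unfolding \<zeta>_def using \<alpha>0 \<alpha> by (intro permutes_compose permutes_inv)
  have "young_perm la \<zeta>" unfolding \<zeta>_def using \<alpha>0 \<alpha> by (intro young_perm_comp young_perm_inv permutes_bij)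
  moreover have "?\<pi> \<circ> \<zeta> \<circ> inv ?\<pi> = inv \<beta>0 \<circ> \<beta>"
  proof
    fix y
    let ?z = "\<alpha> (inv ?\<pi> y)"
    have "\<beta>0 (?\<pi> (inv \<alpha>0 ?z)) = \<beta> (?\<pi> (inv \<alpha> ?z))" using fun_cong[OF eq, of ?z] by simp
    also have "\<dots> = \<beta> y" using permutes_inverses(2)[OF \<alpha>(1)] permutes_inverses(1)[OF \<pi>] by simp
    finally show "(?\<pi> \<circ> \<zeta> \<circ> inv ?\<pi>) y = (inv \<beta>0 \<circ> \<beta>) y"
      using permutes_inverses(2)[OF \<beta>0(1)] by (metis \<zeta>_def comp_apply)
  qed
  then have "young_perm mu (?\<pi> \<circ> \<zeta> \<circ> inv ?\<pi>)"
    using \<beta>0 \<beta> by (simp add: young_perm_comp young_perm_inv permutes_bij)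
  ultimately have "young_perm (cell_comp B) \<zeta>" using young_perm_cell_comp_iff[OF B \<zeta>] by simp
  then have "\<Psi> (B, perm_mat (\<zeta> \<circ> (inv \<alpha> \<circ> \<sigma>))) = \<Psi> (B, perm_mat (inv \<alpha> \<circ> \<sigma>))"
    using ind_space_young_invariant[OF dsum_space_component[OF \<Psi> B] is_composition_cell_comp[OF B] \<zeta>]
      \<sigma> \<alpha> by (simp add: permutes_compose permutes_inv)
  moreover have "inv \<alpha>0 \<circ> \<sigma> = \<zeta> \<circ> (inv \<alpha> \<circ> \<sigma>)"
    unfolding \<zeta>_def using permutes_inverses(1)[OF \<alpha>(1)] by (simp add: fun_eq_iff)
  ultimately show ?thesis by simp
qed

lemma double_coset_value_eq:
  assumes \<Psi>: "\<Psi> \<in> dsum_space la mu k k'" and B: "B \<in> Tmat la mu" and \<sigma>: "\<sigma> permutes {..<n}"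
    and \<alpha>: "\<alpha> permutes {..<n}" "young_perm la \<alpha>" and \<beta>: "\<beta> permutes {..<n}" "young_perm mu \<beta>"
    and eq: "\<sigma>' \<circ> inv \<sigma> = \<beta> \<circ> cell_perm B \<circ> inv \<alpha>"
  shows "double_coset_value \<Psi> \<sigma> \<sigma>' = \<Psi> (B, perm_mat (inv \<alpha> \<circ> \<sigma>))"
proof -
  have matrix: "double_coset_matrix (\<sigma>' \<circ> inv \<sigma>) = B"
    unfolding eq using double_coset_matrix_cong[OF \<alpha> \<beta>(2)] double_coset_matrix_cell_perm[OF B] by simp
  define Q where "Q = (\<lambda>\<alpha>. \<alpha> permutes {..<n} \<and> young_perm la \<alpha> \<and>
      (\<exists>\<beta>. \<beta> permutes {..<n} \<and> young_perm mu \<beta> \<and> \<sigma>' \<circ> inv \<sigma> = \<beta> \<circ> cell_perm B \<circ> inv \<alpha>))"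
  have "Q \<alpha>" unfolding Q_def using \<alpha> \<beta> eq by blast
  then have "Q (Eps Q)" by (rule someI[where P = Q])
  then obtain \<beta>0 where \<alpha>0: "Eps Q permutes {..<n}" "young_perm la (Eps Q)"
    and \<beta>0: "\<beta>0 permutes {..<n}" "young_perm mu \<beta>0"
    and eq0: "\<sigma>' \<circ> inv \<sigma> = \<beta>0 \<circ> cell_perm B \<circ> inv (Eps Q)"
    unfolding Q_def by blast
  have "double_coset_value \<Psi> \<sigma> \<sigma>' = \<Psi> (B, perm_mat (inv (Eps Q) \<circ> \<sigma>))"
    unfolding double_coset_value_def Let_def matrix Q_def by simp
  also have "\<dots> = \<Psi> (B, perm_mat (inv \<alpha> \<circ> \<sigma>))"
    using eq eq0 by (intro dsum_space_decomposition_indep[OF \<Psi> B \<sigma> \<alpha> \<beta> \<alpha>0 \<beta>0]) simp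
  finally show ?thesis .
qed

lemma double_coset_decomposition:
  assumes \<sigma>: "\<sigma> permutes {..<n}" and \<sigma>': "\<sigma>' permutes {..<n}"
  obtains B \<alpha> \<beta> where "B \<in> Tmat la mu" and "\<alpha> permutes {..<n}" "young_perm la \<alpha>"
    and "\<beta> permutes {..<n}" "young_perm mu \<beta>" and "\<sigma>' \<circ> inv \<sigma> = \<beta> \<circ> cell_perm B \<circ> inv \<alpha>"
proof -
  have \<gamma>: "\<sigma>' \<circ> inv \<sigma> permutes {..<n}" using \<sigma> \<sigma>' by (intro permutes_compose permutes_inv)
  let ?B = "double_coset_matrix (\<sigma>' \<circ> inv \<sigma>)"
  have B: "?B \<in> Tmat la mu" by (rule double_coset_matrix_in_Tmat[OF \<gamma>])
  show ?thesis
    using double_coset_matrix_cell_perm[OF B, symmetric]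
    by (rule double_coset_matrix_eqD[OF \<gamma> cell_perm_permutes[OF B]]) (use that B in blast)
qed

lemma double_coset_value_young_invariant:
  assumes \<Psi>: "\<Psi> \<in> dsum_space la mu k k'"
    and \<kappa>: "\<kappa> permutes {..<n}" "young_perm la \<kappa>" and \<kappa>': "\<kappa>' permutes {..<n}" "young_perm mu \<kappa>'"
    and \<sigma>: "\<sigma> permutes {..<n}" and \<sigma>': "\<sigma>' permutes {..<n}"
  shows "double_coset_value \<Psi> (\<kappa> \<circ> \<sigma>) (\<kappa>' \<circ> \<sigma>') = double_coset_value \<Psi> \<sigma> \<sigma>'"
proof -
  obtain B \<alpha> \<beta> where B: "B \<in> Tmat la mu" and \<alpha>: "\<alpha> permutes {..<n}" "young_perm la \<alpha>"
    and \<beta>: "\<beta> permutes {..<n}" "young_perm mu \<beta>" and eq: "\<sigma>' \<circ> inv \<sigma> = \<beta> \<circ> cell_perm B \<circ> inv \<alpha>"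
    by (rule double_coset_decomposition[OF \<sigma> \<sigma>'])
  have bij: "bij \<kappa>" "bij \<sigma>" "bij \<alpha>" using \<kappa> \<sigma> \<alpha> by (auto intro: permutes_bij)
  have moved: "(\<kappa>' \<circ> \<sigma>') \<circ> inv (\<kappa> \<circ> \<sigma>) = (\<kappa>' \<circ> \<beta>) \<circ> cell_perm B \<circ> inv (\<kappa> \<circ> \<alpha>)"
  proof
    fix x
    have "\<sigma>' (inv \<sigma> (inv \<kappa> x)) = \<beta> (cell_perm B (inv \<alpha> (inv \<kappa> x)))"
      using fun_cong[OF eq, of "inv \<kappa> x"] by simp
    then show "((\<kappa>' \<circ> \<sigma>') \<circ> inv (\<kappa> \<circ> \<sigma>)) x = ((\<kappa>' \<circ> \<beta>) \<circ> cell_perm B \<circ> inv (\<kappa> \<circ> \<alpha>)) x"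
      using bij by (simp add: o_inv_distrib)
  qed
  have "double_coset_value \<Psi> (\<kappa> \<circ> \<sigma>) (\<kappa>' \<circ> \<sigma>') = \<Psi> (B, perm_mat (inv (\<kappa> \<circ> \<alpha>) \<circ> (\<kappa> \<circ> \<sigma>)))"
    by (rule double_coset_value_eq[OF \<Psi> B _ _ _ _ _ moved])
       (use \<kappa> \<kappa>' \<sigma> \<alpha> \<beta> in \<open>auto intro: permutes_compose young_perm_comp\<close>)
  also have "inv (\<kappa> \<circ> \<alpha>) \<circ> (\<kappa> \<circ> \<sigma>) = inv \<alpha> \<circ> \<sigma>"
    using bij permutes_inverses(2)[OF \<kappa>(1)] by (simp add: o_inv_distrib fun_eq_iff)
  also have "\<Psi> (B, perm_mat (inv \<alpha> \<circ> \<sigma>)) = double_coset_value \<Psi> \<sigma> \<sigma>'"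
    by (rule double_coset_value_eq[OF \<Psi> B \<sigma> \<alpha> \<beta> eq, symmetric])
  finally show ?thesis .
qed

lemma double_coset_value_cell_perm:
  assumes \<Psi>: "\<Psi> \<in> dsum_space la mu k k'" and B: "B \<in> Tmat la mu" and \<sigma>: "\<sigma> permutes {..<n}"
  shows "double_coset_value \<Psi> \<sigma> (cell_perm B \<circ> \<sigma>) = \<Psi> (B, perm_mat \<sigma>)"
proof -
  have "(cell_perm B \<circ> \<sigma>) \<circ> inv \<sigma> = id \<circ> cell_perm B \<circ> inv id"
    using permutes_inverses(1)[OF \<sigma>] by (simp add: fun_eq_iff)
  from double_coset_value_eq[OF \<Psi> B \<sigma> permutes_id young_perm_id permutes_id young_perm_id this]
  show ?thesis by simp
qed

lemma mackey_map_apply: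
  assumes \<Phi>: "\<Phi> \<in> ind_pair_space n la mu k k'" and B: "B \<in> Tmat la mu" and x: "(t, \<sigma>) \<in> wreath n"
  shows "mackey_map \<Phi> (B, (t, \<sigma>))
       = torus_char (cell_comp B) (cell_wts B k k') t * \<Phi> (perm_mat \<sigma>, perm_mat (cell_perm B \<circ> \<sigma>))"
proof -
  let ?\<pi> = "cell_perm B"
  have "wmult (perm_mat ?\<pi>) (t, \<sigma>) \<in> wreath n"
    by (rule wmult_in_wreath[OF perm_mat_in_wreath[OF cell_perm_permutes[OF B]] x])
  then have "mackey_map \<Phi> (B, (t, \<sigma>))
      = torus_char la k t * torus_char mu k' (\<lambda>i. t (inv ?\<pi> i)) * \<Phi> (perm_mat \<sigma>, perm_mat (?\<pi> \<circ> \<sigma>))"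
    using B x ind_pair_space_torus_char[OF \<Phi> x] by (simp add: mackey_map_def)
  also have "\<dots> = torus_char (cell_comp B) (cell_wts B k k') t * \<Phi> (perm_mat \<sigma>, perm_mat (?\<pi> \<circ> \<sigma>))"
    using torus_char_cell_comp[OF B, of t k k'] x by (simp add: wreath_def)
  finally show ?thesis .
qed

lemma mackey_map_in_dsum_space:
  assumes \<Phi>: "\<Phi> \<in> ind_pair_space n la mu k k'"
  shows "mackey_map \<Phi> \<in> dsum_space la mu k k'"
proof -
  have "(\<lambda>x. mackey_map \<Phi> (B, x)) \<in> ind_space n (cell_comp B) (cell_wts B k k')"
    if B: "B \<in> Tmat la mu" for B
  proof -
    let ?\<pi> = "cell_perm B"
    have \<pi>: "?\<pi> permutes {..<n}" by (rule cell_perm_permutes[OF B])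
    define F where "F \<sigma> = \<Phi> (perm_mat \<sigma>, perm_mat (?\<pi> \<circ> \<sigma>))" for \<sigma>
    have "(\<lambda>x. mackey_map \<Phi> (B, x))
        = (\<lambda>x. if x \<in> wreath n then torus_char (cell_comp B) (cell_wts B k k') (fst x) * F (snd x) else 0)"
      using mackey_map_apply[OF \<Phi> B] by (auto simp: fun_eq_iff F_def mackey_map_def)
    also have "\<dots> \<in> ind_space n (cell_comp B) (cell_wts B k k')"
    proof (rule ind_spaceI[OF is_composition_cell_comp[OF B]])
      fix \<kappa> \<sigma> assume \<kappa>: "\<kappa> permutes {..<n}" "young_perm (cell_comp B) \<kappa>" and \<sigma>: "\<sigma> permutes {..<n}"
      have young: "young_perm la \<kappa>" "young_perm mu (?\<pi> \<circ> \<kappa> \<circ> inv ?\<pi>)"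
        using young_perm_cell_comp_iff[OF B \<kappa>(1)] \<kappa>(2) by auto
      \<comment> \<open>moving \<open>\<kappa>\<close> past \<open>cell_perm B\<close> turns it into an element of the Young subgroup of \<open>mu\<close>\<close>
      have "?\<pi> \<circ> (\<kappa> \<circ> \<sigma>) = (?\<pi> \<circ> \<kappa> \<circ> inv ?\<pi>) \<circ> (?\<pi> \<circ> \<sigma>)"
        using permutes_inverses(2)[OF \<pi>] by (simp add: fun_eq_iff)
      then have "F (\<kappa> \<circ> \<sigma>) = \<Phi> (perm_mat (\<kappa> \<circ> \<sigma>), perm_mat ((?\<pi> \<circ> \<kappa> \<circ> inv ?\<pi>) \<circ> (?\<pi> \<circ> \<sigma>)))"
        by (simp add: F_def)
      also have "\<dots> = F \<sigma>" unfolding F_def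
        by (rule ind_pair_space_young_invariant[OF \<Phi> \<kappa>(1) young(1) _ young(2) \<sigma>])
           (use \<pi> \<kappa> \<sigma> in \<open>auto intro: permutes_compose permutes_inv\<close>)
      finally show "F (\<kappa> \<circ> \<sigma>) = F \<sigma>" .
    qed
    finally show ?thesis .
  qed
  then show ?thesis
    using is_composition_cell_comp unfolding dsum_space_def Mperm_def is_composition_def
    by (auto simp: mackey_map_def)
qed

lemma mackey_inv_in_ind_pair_space:
  assumes \<Psi>: "\<Psi> \<in> dsum_space la mu k k'"
  shows "mackey_inv k k' \<Psi> \<in> ind_pair_space n la mu k k'"
  unfolding ind_pair_space_def
proof (intro CollectI conjI allI impI ballI)
  fix x y assume "x \<in> wreath n" "y \<in> wreath n"
  moreover have "perm_mat (snd x) \<in> wreath n" "perm_mat (snd y) \<in> wreath n"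
    using \<open>x \<in> wreath n\<close> \<open>y \<in> wreath n\<close> by (auto simp: wreath_def)
  ultimately show "mackey_inv k k' \<Psi> (x, y) = torus_char la k (fst x) * torus_char mu k' (fst y)
      * mackey_inv k k' \<Psi> (perm_mat (snd x), perm_mat (snd y))"
    by (simp add: mackey_inv_def)
next
  fix \<kappa> \<kappa>' \<sigma> \<sigma>' assume perms: "\<kappa> permutes {..<n} \<and> young_perm la \<kappa> \<and> \<kappa>' permutes {..<n} \<and>
      young_perm mu \<kappa>' \<and> \<sigma> permutes {..<n} \<and> \<sigma>' permutes {..<n}"
  then show "mackey_inv k k' \<Psi> (perm_mat (\<kappa> \<circ> \<sigma>), perm_mat (\<kappa>' \<circ> \<sigma>'))
      = mackey_inv k k' \<Psi> (perm_mat \<sigma>, perm_mat \<sigma>')"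
    using double_coset_value_young_invariant[OF \<Psi>]
    by (simp add: mackey_inv_def perm_mat_in_wreath permutes_compose)
qed (auto simp: mackey_inv_def)

lemma mackey_map_inv:
  assumes \<Psi>: "\<Psi> \<in> dsum_space la mu k k'"
  shows "mackey_map (mackey_inv k k' \<Psi>) = \<Psi>"
proof (intro ext, clarify)
  fix B t \<sigma>
  show "mackey_map (mackey_inv k k' \<Psi>) (B, t, \<sigma>) = \<Psi> (B, t, \<sigma>)"
  proof (cases "B \<in> Tmat la mu \<and> (t, \<sigma>) \<in> wreath n")
    case False
    show ?thesis
    proof (cases "B \<in> Tmat la mu")
      case True
      with False have "(t, \<sigma>) \<notin> wreath n" by simp
      then show ?thesis
        using ind_space_vanishes[OF dsum_space_component[OF \<Psi> True]] by (simp add: mackey_map_def)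
    qed (simp add: mackey_map_def dsum_space_vanishes[OF \<Psi>])
  next
    case True
    then have B: "B \<in> Tmat la mu" and x: "(t, \<sigma>) \<in> wreath n" by auto
    have \<sigma>: "\<sigma> permutes {..<n}" using x by (simp add: wreath_def)
    have "mackey_map (mackey_inv k k' \<Psi>) (B, t, \<sigma>) = torus_char (cell_comp B) (cell_wts B k k') t
        * mackey_inv k k' \<Psi> (perm_mat \<sigma>, perm_mat (cell_perm B \<circ> \<sigma>))"
      by (rule mackey_map_apply[OF mackey_inv_in_ind_pair_space[OF \<Psi>] B x])
    also have "mackey_inv k k' \<Psi> (perm_mat \<sigma>, perm_mat (cell_perm B \<circ> \<sigma>)) = \<Psi> (B, perm_mat \<sigma>)"
      using \<sigma> cell_perm_permutes[OF B] double_coset_value_cell_perm[OF \<Psi> B \<sigma>]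
      by (simp add: mackey_inv_def perm_mat_in_wreath permutes_compose)
    also have "torus_char (cell_comp B) (cell_wts B k k') t * \<Psi> (B, perm_mat \<sigma>) = \<Psi> (B, t, \<sigma>)"
      using ind_space_torus_char[OF dsum_space_component[OF \<Psi> B] is_composition_cell_comp[OF B] x] by simp
    finally show ?thesis .
  qed
qed

lemma mackey_inv_map:
  assumes \<Phi>: "\<Phi> \<in> ind_pair_space n la mu k k'"
  shows "mackey_inv k k' (mackey_map \<Phi>) = \<Phi>"
proof (intro ext, clarify)
  fix t \<sigma> t' \<sigma>'
  show "mackey_inv k k' (mackey_map \<Phi>) ((t, \<sigma>), (t', \<sigma>')) = \<Phi> ((t, \<sigma>), (t', \<sigma>'))"
  proof (cases "(t, \<sigma>) \<in> wreath n \<and> (t', \<sigma>') \<in> wreath n")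
    case False
    then show ?thesis using ind_pair_space_vanishes[OF \<Phi> False] by (auto simp: mackey_inv_def)
  next
    case True
    then have x: "(t, \<sigma>) \<in> wreath n" and y: "(t', \<sigma>') \<in> wreath n" by auto
    have \<sigma>: "\<sigma> permutes {..<n}" "\<sigma>' permutes {..<n}" using x y by (auto simp: wreath_def)
    obtain B \<alpha> \<beta> where B: "B \<in> Tmat la mu" and \<alpha>: "\<alpha> permutes {..<n}" "young_perm la \<alpha>"
      and \<beta>: "\<beta> permutes {..<n}" "young_perm mu \<beta>" and eq: "\<sigma>' \<circ> inv \<sigma> = \<beta> \<circ> cell_perm B \<circ> inv \<alpha>"
      by (rule double_coset_decomposition[OF \<sigma>])
    let ?\<pi> = "cell_perm B" and ?\<rho> = "inv \<alpha> \<circ> \<sigma>"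
    have \<pi>: "?\<pi> permutes {..<n}" by (rule cell_perm_permutes[OF B])
    have \<rho>: "?\<rho> permutes {..<n}" using \<alpha> \<sigma> by (intro permutes_compose permutes_inv)
    have "double_coset_value (mackey_map \<Phi>) \<sigma> \<sigma>' = mackey_map \<Phi> (B, perm_mat ?\<rho>)"
      by (rule double_coset_value_eq[OF mackey_map_in_dsum_space[OF \<Phi>] B \<sigma>(1) \<alpha> \<beta> eq])
    also have "\<dots> = \<Phi> (perm_mat ?\<rho>, perm_mat (?\<pi> \<circ> ?\<rho>))"
      using mackey_map_apply[OF \<Phi> B perm_mat_in_wreath[OF \<rho>]] by simp
    also have "\<dots> = \<Phi> (perm_mat (\<alpha> \<circ> ?\<rho>), perm_mat (\<beta> \<circ> (?\<pi> \<circ> ?\<rho>)))"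
      by (rule ind_pair_space_young_invariant[OF \<Phi> \<alpha> \<beta> \<rho>, symmetric])
         (use \<pi> \<rho> in \<open>blast intro: permutes_compose\<close>)
    also have "\<alpha> \<circ> ?\<rho> = \<sigma>" using permutes_inverses(1)[OF \<alpha>(1)] by (simp add: fun_eq_iff)
    also have "\<beta> \<circ> (?\<pi> \<circ> ?\<rho>) = \<sigma>'"
    proof
      fix z
      have "\<beta> (?\<pi> (inv \<alpha> (\<sigma> z))) = \<sigma>' (inv \<sigma> (\<sigma> z))" using fun_cong[OF eq, of "\<sigma> z"] by simp
      then show "(\<beta> \<circ> (?\<pi> \<circ> ?\<rho>)) z = \<sigma>' z" using permutes_inverses(2)[OF \<sigma>(1)] by simp
    qed
    finally have "double_coset_value (mackey_map \<Phi>) \<sigma> \<sigma>' = \<Phi> (perm_mat \<sigma>, perm_mat \<sigma>')" .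
    then show ?thesis using ind_pair_space_torus_char[OF \<Phi> x y] x y by (simp add: mackey_inv_def)
  qed
qed

lemma bij_betw_mackey_map:
  "bij_betw mackey_map (ind_pair_space n la mu k k') (dsum_space la mu k k')"
  by (rule bij_betw_byWitness[where f' = "mackey_inv k k'"])
     (auto simp: mackey_inv_map mackey_map_inv mackey_map_in_dsum_space mackey_inv_in_ind_pair_space)

lemma mackey_map_equivariant:
  assumes g: "g \<in> wreath n"
  shows "mackey_map (tensor_act n g \<Phi>) = dsum_act n g (mackey_map \<Phi>)"
proof (intro ext, clarify)
  fix B t \<sigma>
  show "mackey_map (tensor_act n g \<Phi>) (B, t, \<sigma>) = dsum_act n g (mackey_map \<Phi>) (B, t, \<sigma>)"
  proof (cases "B \<in> Tmat la mu \<and> (t, \<sigma>) \<in> wreath n")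
    case False
    then show ?thesis by (auto simp: mackey_map_def dsum_act_def ind_act_def)
  next
    case True
    then have B: "B \<in> Tmat la mu" and x: "(t, \<sigma>) \<in> wreath n" by auto
    have \<pi>: "cell_perm B permutes {..<n}" by (rule cell_perm_permutes[OF B])
    obtain s \<tau> where g_eq: "g = (s, \<tau>)" by fastforce
    have "wmult (wmult (perm_mat (cell_perm B)) (t, \<sigma>)) g = wmult (perm_mat (cell_perm B)) (wmult (t, \<sigma>) g)"
      unfolding g_eq using \<pi> x by (intro wmult_assoc permutes_bij) (auto simp: wreath_def)
    moreover have "wmult (perm_mat (cell_perm B)) (t, \<sigma>) \<in> wreath n"
      by (rule wmult_in_wreath[OF perm_mat_in_wreath[OF \<pi>] x])
    ultimately show ?thesis
      using wmult_in_wreath[OF x g] x B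
      by (simp add: mackey_map_def dsum_act_def ind_act_def tensor_act_def del: wmult_Pair)
  qed
qed

lemma mackey_map_linear:
  "mackey_map (\<lambda>x. a * u x + b * v x) = (\<lambda>y. a * mackey_map u y + b * mackey_map v y)"
  by (auto simp: mackey_map_def fun_eq_iff)

end

theorem lemma3p3:
  fixes n :: nat and la mu :: "nat list" and k k' :: "int list"
  assumes "is_composition la n" and "is_composition mu n"
    and "length k = length la" and "length k' = length mu"
  shows "rep_iso n (tensor_space (Mperm la k) (Mperm mu k')) (tensor_act n)
                   (dsum_space la mu k k') (dsum_act n)"
  unfolding rep_iso_def tensor_space_Mperm_eq[OF assms(1,2)]
  using bij_betw_mackey_map[OF assms(1,2)] mackey_map_linear[OF assms(1,2)] mackey_map_equivariant[OF assms(1,2)]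
  by blast

end
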